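(* Let $G$ be a finite group whose set of irreducible character degrees is $cd(G) = \{1, m\}$ and whose set of conjugacy class sizes is $cc(G) = \{1, s\}$. Then $AMZA(G) = AMZL(G)$.
   Context: $cd(G)$ is the set of degrees of irreducible complex characters of $G$ and $cc(G)$ the set of sizes of conjugacy classes. For a finite group $G$, $\mathrm{Irr}(G)$ is the set of irreducible complex characters, $d_\chi=\chi(e)$, $\mathrm{Conj}(G)$ the set of conjugacy classes, $|C|$ the class size and $\chi(C)$ the value of $\chi$ on $C$. $ZL^1(G)$ is the centre of the group algebra $L^1(G)$ and $ZA(G)$ the closed span of $\mathrm{Irr}(G)$ in the Fourier algebra $A(G)$; $AMZL(G)$, $AMZA(G)$ are their amenability constants (infimum of the bounds of bounded approximate diagonals), which for finite $G$ are given by \[ AMZL(G) = \frac{1}{|G|^2}\sum_{C,C'\in\mathrm{Conj}(G)} |C||C'|\left|\sum_{\chi\in\mathrm{Irr}(G)} d_\chi^2\,\chi(C)\overline{\chi(C')}\right|,\qquad AMZA(G) = \frac{1}{|G|^2}\sum_{\chi,\chi'\in\mathrm{Irr}(G)} d_\chi d_{\chi'}\left|\sum_{C\in\mathrm{Conj}(G)} |C|^2\,\chi(C)\overline{\chi'(C)}\right|. \] *)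

theory Defs
  imports "HOL-Algebra.Group" "Jordan_Normal_Form.Matrix"
begin

definition mat_tr :: "complex mat \<Rightarrow> complex" where
  "mat_tr A = (\<Sum>i<dim_row A. A $$ (i, i))"

definition is_rep :: "'a monoid \<Rightarrow> nat \<Rightarrow> ('a \<Rightarrow> complex mat) \<Rightarrow> bool" where
  "is_rep G n \<rho> \<longleftrightarrow>
     (\<forall>g\<in>carrier G. \<rho> g \<in> carrier_mat n n) \<and>
     \<rho> \<one>\<^bsub>G\<^esub> = 1\<^sub>m n \<and>
     (\<forall>g\<in>carrier G. \<forall>h\<in>carrier G. \<rho> (g \<otimes>\<^bsub>G\<^esub> h) = \<rho> g * \<rho> h)"

definition invariant_subspace :: "'a monoid \<Rightarrow> nat \<Rightarrow> ('a \<Rightarrow> complex mat) \<Rightarrow> complex vec set \<Rightarrow> bool" where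
  "invariant_subspace G n \<rho> W \<longleftrightarrow>
     W \<subseteq> carrier_vec n \<and> 0\<^sub>v n \<in> W \<and>
     (\<forall>v\<in>W. \<forall>w\<in>W. v + w \<in> W) \<and>
     (\<forall>c::complex. \<forall>v\<in>W. c \<cdot>\<^sub>v v \<in> W) \<and>
     (\<forall>g\<in>carrier G. \<forall>v\<in>W. \<rho> g *\<^sub>v v \<in> W)"

definition irreducible_rep :: "'a monoid \<Rightarrow> nat \<Rightarrow> ('a \<Rightarrow> complex mat) \<Rightarrow> bool" where
  "irreducible_rep G n \<rho> \<longleftrightarrow> is_rep G n \<rho> \<and> n > 0 \<and>
     (\<forall>W. invariant_subspace G n \<rho> W \<longrightarrow> W = {0\<^sub>v n} \<or> W = carrier_vec n)"

definition character_of :: "'a monoid \<Rightarrow> ('a \<Rightarrow> complex mat) \<Rightarrow> 'a \<Rightarrow> complex" where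
  "character_of G \<rho> = (\<lambda>g. if g \<in> carrier G then mat_tr (\<rho> g) else 0)"

definition Irr :: "'a monoid \<Rightarrow> ('a \<Rightarrow> complex) set" where
  "Irr G = {character_of G \<rho> | n \<rho>. irreducible_rep G n \<rho>}"

definition cd :: "'a monoid \<Rightarrow> nat set" where
  "cd G = {n. \<exists>\<rho>. irreducible_rep G n \<rho>}"

definition conj_class :: "'a monoid \<Rightarrow> 'a \<Rightarrow> 'a set" where
  "conj_class G g = {h \<otimes>\<^bsub>G\<^esub> g \<otimes>\<^bsub>G\<^esub> inv\<^bsub>G\<^esub> h | h. h \<in> carrier G}"

definition Conj :: "'a monoid \<Rightarrow> 'a set set" where
  "Conj G = conj_class G ` carrier G"

definition cc :: "'a monoid \<Rightarrow> nat set" where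
  "cc G = card ` Conj G"

definition cval :: "('a \<Rightarrow> complex) \<Rightarrow> 'a set \<Rightarrow> complex" where
  "cval \<chi> C = \<chi> (SOME g. g \<in> C)"

definition deg :: "'a monoid \<Rightarrow> ('a \<Rightarrow> complex) \<Rightarrow> complex" where
  "deg G \<chi> = \<chi> \<one>\<^bsub>G\<^esub>"

definition AMZL :: "'a monoid \<Rightarrow> real" where
  "AMZL G = (1 / real (card (carrier G)) ^ 2) *
     (\<Sum>C\<in>Conj G. \<Sum>C'\<in>Conj G. real (card C) * real (card C') *
        cmod (\<Sum>\<chi>\<in>Irr G. (deg G \<chi>)\<^sup>2 * cval \<chi> C * cnj (cval \<chi> C')))"

definition AMZA :: "'a monoid \<Rightarrow> real" where
  "AMZA G = (1 / real (card (carrier G)) ^ 2) *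
     (\<Sum>\<chi>\<in>Irr G. \<Sum>\<chi>'\<in>Irr G. cmod (deg G \<chi> * deg G \<chi>') *
        cmod (\<Sum>C\<in>Conj G. of_nat (card C ^ 2) * cval \<chi> C * cnj (cval \<chi>' C)))"

end

(*
  Write n = |G|, Z for the centre, k = |Z| and a for the number of linear characters.

  Conjugacy classes have size 1 on Z and s elsewhere, so the inner sums of AMZA are
  s n [chi = chi'] - (s - 1) sum_{z in Z} chi(z) conj(chi'(z)).  By Schur's lemma an irreducible
  character restricted to Z is its degree times a unitary homomorphism, so each central sum is
  either 0 or d_chi d_chi' k.  This yields  n^2 AMZA = (2s - 1) n^2 - 2 (s - 1) k sum_chi d_chi^4.

  Dually, degrees are 1 and m, so the inner sums of AMZL are m^2 times the column orthogonality
  sum minus (m^2 - 1) sum_lambda lambda(g) conj(lambda(h)) over the linear characters lambda, and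
  the latter is either 0 or a.  This yields  n^2 AMZL = (2m^2 - 1) n^2 - 2 (m^2 - 1) a sum_g |g^G|.

  The two expressions agree because of  sum_chi d_chi^2 = n  and the class equation
  s |Irr G| = s k + (n - k).  Both orthogonality relations are derived from Schur's lemma and the
  complete reducibility of unitary representations.
*)
theory Submission
  imports Defs "Jordan_Normal_Form.Spectral_Radius"
begin

section \<open>Hermitian geometry of complex coordinate spaces\<close>

lemma mat_adjoint_eq:
  "mat_adjoint (A :: complex mat) = mat (dim_col A) (dim_row A) (\<lambda>(i,j). cnj (A $$ (j,i)))"
  unfolding mat_adjoint_def by (rule eq_matI) (auto simp: mat_of_rows_def)

lemma dim_mat_adjoint[simp]:
  "dim_row (mat_adjoint (A :: complex mat)) = dim_col A"
  "dim_col (mat_adjoint (A :: complex mat)) = dim_row A"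
  unfolding mat_adjoint_eq by auto

lemma mat_adjoint_carrier[simp]:
  "(A :: complex mat) \<in> carrier_mat n m \<Longrightarrow> mat_adjoint A \<in> carrier_mat m n"
  unfolding mat_adjoint_eq by auto

lemma index_mat_adjoint[simp]:
  "i < dim_col A \<Longrightarrow> j < dim_row A \<Longrightarrow> mat_adjoint (A :: complex mat) $$ (i,j) = cnj (A $$ (j,i))"
  unfolding mat_adjoint_eq by auto

lemma mat_adjoint_mat_adjoint[simp]: "mat_adjoint (mat_adjoint (A :: complex mat)) = A"
  by (rule eq_matI) auto

lemma mat_adjoint_mult:
  fixes A B :: "complex mat"
  assumes "A \<in> carrier_mat n m" "B \<in> carrier_mat m k"
  shows "mat_adjoint (A * B) = mat_adjoint B * mat_adjoint A"
  using assms by (intro eq_matI) (auto simp: scalar_prod_def mult.commute intro!: sum.cong)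

lemma mat_right_inverse_dim_le:
  fixes A B :: "'a :: field mat"
  assumes A: "A \<in> carrier_mat e d" and B: "B \<in> carrier_mat d e" and AB: "A * B = 1\<^sub>m e"
  shows "e \<le> d"
proof (rule ccontr)
  assume "\<not> e \<le> d"
  hence de: "d < e" by simp
  \<comment> \<open>padded to square matrices, \<open>A' * B' = 1\<close> forces \<open>B' * A' = 1\<close>, whose last diagonal entry is \<open>0\<close>\<close>
  define A' where "A' = mat e e (\<lambda>(i,j). if j < d then A $$ (i,j) else 0)"
  define B' where "B' = mat e e (\<lambda>(i,j). if i < d then B $$ (i,j) else 0)"
  have A': "A' \<in> carrier_mat e e" and B': "B' \<in> carrier_mat e e" unfolding A'_def B'_def by auto
  have "A' * B' = A * B"
  proof (rule eq_matI)
    fix i j assume ij: "i < dim_row (A * B)" "j < dim_col (A * B)"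
    have "(A' * B') $$ (i,j) = (\<Sum>k<e. if k < d then A $$ (i,k) * B $$ (k,j) else 0)"
      using ij A B unfolding A'_def B'_def
      by (auto simp: scalar_prod_def atLeast0LessThan intro!: sum.cong)
    also have "\<dots> = (\<Sum>k<d. A $$ (i,k) * B $$ (k,j))"
    proof -
      have "{..<e} \<inter> {k. k < d} = {..<d}" using de by auto
      thus ?thesis by (simp add: sum.If_cases)
    qed
    also have "\<dots> = (A * B) $$ (i,j)"
      using ij A B by (auto simp: scalar_prod_def atLeast0LessThan)
    finally show "(A' * B') $$ (i,j) = (A * B) $$ (i,j)" .
  qed (use A B A' B' in auto)
  hence "B' * A' = 1\<^sub>m e" using mat_mult_left_right_inverse[OF A' B'] AB by simp
  hence "(B' * A') $$ (e - 1, e - 1) = 1" using de by simp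
  moreover have "(B' * A') $$ (e - 1, e - 1) = 0"
    using de A' B' unfolding B'_def by (auto simp: scalar_prod_def)
  ultimately show False by simp
qed

lemma cscalar_prod_eq_sum:
  "(v :: complex vec) \<in> carrier_vec n \<Longrightarrow> w \<in> carrier_vec n \<Longrightarrow> v \<bullet>c w = (\<Sum>i<n. v $ i * cnj (w $ i))"
  by (auto simp: scalar_prod_def atLeast0LessThan)

lemma cscalar_prod_mult_mat_vec:
  fixes A :: "complex mat"
  assumes A: "A \<in> carrier_mat n m" and v: "v \<in> carrier_vec m" and w: "w \<in> carrier_vec n"
  shows "(A *\<^sub>v v) \<bullet>c w = v \<bullet>c (mat_adjoint A *\<^sub>v w)"
proof -
  have "(A *\<^sub>v v) \<bullet>c w = (\<Sum>i<n. (\<Sum>k<m. A $$ (i,k) * v $ k) * cnj (w $ i))"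
    using A v w by (subst cscalar_prod_eq_sum[of _ n]) (auto simp: scalar_prod_def atLeast0LessThan)
  also have "\<dots> = (\<Sum>k<m. v $ k * cnj (\<Sum>i<n. cnj (A $$ (i,k)) * w $ i))"
    by (simp add: sum_distrib_left sum_distrib_right mult_ac sum.swap[of _ "{..<n}"])
  also have "\<dots> = v \<bullet>c (mat_adjoint A *\<^sub>v w)"
    using A v w mult_mat_vec_carrier[OF mat_adjoint_carrier[OF A] w] by (subst cscalar_prod_eq_sum[of _ m])
      (auto simp: scalar_prod_def atLeast0LessThan intro!: sum.cong)
  finally show ?thesis .
qed

lemma cscalar_prod_swap:
  "(v :: complex vec) \<in> carrier_vec n \<Longrightarrow> w \<in> carrier_vec n \<Longrightarrow> w \<bullet>c v = cnj (v \<bullet>c w)"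
  by (simp add: cscalar_prod_eq_sum[of _ n] mult.commute)

lemma add_cscalar_prod_distrib:
  "(u :: complex vec) \<in> carrier_vec n \<Longrightarrow> v \<in> carrier_vec n \<Longrightarrow> w \<in> carrier_vec n \<Longrightarrow>
    (u + v) \<bullet>c w = u \<bullet>c w + v \<bullet>c w"
  by (rule add_scalar_prod_distrib[of _ n]) auto

lemma smult_cscalar_prod_distrib:
  "(v :: complex vec) \<in> carrier_vec n \<Longrightarrow> w \<in> carrier_vec n \<Longrightarrow> (c \<cdot>\<^sub>v v) \<bullet>c w = c * (v \<bullet>c w)"
  by (rule smult_scalar_prod_distrib[of _ n]) auto

lemma cscalar_prod_smult_distrib:
  "(v :: complex vec) \<in> carrier_vec n \<Longrightarrow> w \<in> carrier_vec n \<Longrightarrow> v \<bullet>c (c \<cdot>\<^sub>v w) = cnj c * (v \<bullet>c w)"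
  by (simp add: cscalar_prod_eq_sum[of _ n] sum_distrib_left mult_ac)

lemma cscalar_prod_self: "(v :: complex vec) \<bullet>c v = of_real (\<Sum>i<dim_vec v. (cmod (v $ i))\<^sup>2)"
  unfolding of_real_sum complex_norm_square by (simp add: scalar_prod_def atLeast0LessThan)

lemma cscalar_prod_self_real: "Re ((v :: complex vec) \<bullet>c v) \<ge> 0" "Im ((v :: complex vec) \<bullet>c v) = 0"
  unfolding cscalar_prod_self by (auto intro: sum_nonneg)

lemma cscalar_prod_self_eq_0_iff:
  assumes "(v :: complex vec) \<in> carrier_vec n"
  shows "v \<bullet>c v = 0 \<longleftrightarrow> v = 0\<^sub>v n"
proof
  assume "v \<bullet>c v = 0"
  hence "(\<Sum>i<dim_vec v. (cmod (v $ i))\<^sup>2) = 0" unfolding cscalar_prod_self of_real_eq_0_iff .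
  hence "\<forall>i\<in>{..<dim_vec v}. (cmod (v $ i))\<^sup>2 = 0" by (subst sum_nonneg_eq_0_iff[symmetric]) auto
  thus "v = 0\<^sub>v n" using assms by (intro eq_vecI) auto
qed (use assms in auto)

lemma cscalar_prod_self_pos:
  assumes "(v :: complex vec) \<in> carrier_vec n" "v \<noteq> 0\<^sub>v n"
  shows "Re (v \<bullet>c v) > 0"
proof -
  have "v \<bullet>c v \<noteq> 0" using cscalar_prod_self_eq_0_iff assms by blast
  thus ?thesis using cscalar_prod_self_real[of v] less_eq_real_def by (auto simp: complex_eq_iff)
qed

lemma exists_normalizing_scalar:
  assumes y: "(y :: complex vec) \<in> carrier_vec n" and y0: "y \<noteq> 0\<^sub>v n"
  obtains c where "(c \<cdot>\<^sub>v y) \<bullet>c (c \<cdot>\<^sub>v y) = 1"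
proof -
  define r where "r = Re (y \<bullet>c y)"
  have yy: "y \<bullet>c y = of_real r"
    unfolding r_def using cscalar_prod_self_real(2)[of y] by (simp add: complex_eq_iff)
  have r0: "r > 0" unfolding r_def by (rule cscalar_prod_self_pos[OF y y0])
  have "(complex_of_real (1 / sqrt r) \<cdot>\<^sub>v y) \<bullet>c (complex_of_real (1 / sqrt r) \<cdot>\<^sub>v y) = 1"
    using y r0
    by (simp add: smult_cscalar_prod_distrib[of _ n] cscalar_prod_smult_distrib[of _ n] yy flip: of_real_mult)
  thus ?thesis using that by blast
qed

lemma mat_eq_by_mult_vec:
  fixes A B :: "'a :: comm_ring_1 mat"
  assumes A: "A \<in> carrier_mat n m" and B: "B \<in> carrier_mat n m"
    and eq: "\<And>x. x \<in> carrier_vec m \<Longrightarrow> A *\<^sub>v x = B *\<^sub>v x"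
  shows "A = B"
proof (rule eq_matI)
  fix i j assume ij: "i < dim_row B" "j < dim_col B"
  have "A $$ (i,j) = (A *\<^sub>v unit_vec m j) $ i" using A ij B by (auto simp: scalar_prod_right_unit)
  also have "\<dots> = (B *\<^sub>v unit_vec m j) $ i" using eq[of "unit_vec m j"] by simp
  also have "\<dots> = B $$ (i,j)" using B ij by (auto simp: scalar_prod_right_unit)
  finally show "A $$ (i,j) = B $$ (i,j)" .
qed (use A B in auto)

lemma mult_mat_vec_zero: "(A :: 'a :: comm_ring_1 mat) \<in> carrier_mat n m \<Longrightarrow> A *\<^sub>v 0\<^sub>v m = 0\<^sub>v n"
  by (intro eq_vecI) (auto simp: scalar_prod_def)

lemma zero_mat_mult_vec[simp]: "(x :: 'a :: comm_ring_1 vec) \<in> carrier_vec m \<Longrightarrow> 0\<^sub>m n m *\<^sub>v x = 0\<^sub>v n"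
  by (intro eq_vecI) (auto simp: scalar_prod_def)

lemma smult_mat_mult_vec:
  fixes A :: "'a :: comm_ring_1 mat"
  assumes "A \<in> carrier_mat n m" "v \<in> carrier_vec m"
  shows "(c \<cdot>\<^sub>m A) *\<^sub>v v = c \<cdot>\<^sub>v (A *\<^sub>v v)"
  using assms by (intro eq_vecI) (auto simp: scalar_prod_def sum_distrib_left mult.assoc)

lemma mult_mat_index_sum:
  fixes A B :: "'a :: comm_ring_1 mat"
  assumes "A \<in> carrier_mat n k" "B \<in> carrier_mat k m" "i < n" "j < m"
  shows "(A * B) $$ (i,j) = (\<Sum>l<k. A $$ (i,l) * B $$ (l,j))"
  using assms by (simp add: scalar_prod_def atLeast0LessThan)

subsection \<open>Orthonormal bases\<close>

definition vec_subspace :: "nat \<Rightarrow> complex vec set \<Rightarrow> bool" where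
  "vec_subspace n W \<longleftrightarrow> W \<subseteq> carrier_vec n \<and> 0\<^sub>v n \<in> W \<and>
     (\<forall>v\<in>W. \<forall>w\<in>W. v + w \<in> W) \<and> (\<forall>c. \<forall>v\<in>W. c \<cdot>\<^sub>v v \<in> W)"

definition orthonormal :: "nat \<Rightarrow> complex vec list \<Rightarrow> bool" where
  "orthonormal n us \<longleftrightarrow> set us \<subseteq> carrier_vec n \<and>
     (\<forall>i<length us. \<forall>j<length us. us ! i \<bullet>c us ! j = (if i = j then 1 else 0))"

text \<open>With \<open>U\<close> the matrix with columns \<open>us\<close>, the map \<open>x \<mapsto> U U\<^sup>* x\<close> is the orthogonal projection
  onto the span of \<open>us\<close>; \<open>us\<close> is a basis of \<open>W\<close> iff this projection fixes \<open>W\<close>.\<close>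
definition orthonormal_basis :: "nat \<Rightarrow> complex vec list \<Rightarrow> complex vec set \<Rightarrow> bool" where
  "orthonormal_basis n us W \<longleftrightarrow> orthonormal n us \<and> set us \<subseteq> W \<and>
     (\<forall>x\<in>W. mat_of_cols n us *\<^sub>v (mat_adjoint (mat_of_cols n us) *\<^sub>v x) = x)"

lemma vec_subspace_diff:
  assumes W: "vec_subspace n W" and x: "x \<in> W" and y: "y \<in> W"
  shows "x - y \<in> W"
proof -
  have "x + (-1) \<cdot>\<^sub>v y \<in> W" using W x y unfolding vec_subspace_def by auto
  moreover have "x + (-1) \<cdot>\<^sub>v y = x - y"
    using W x y unfolding vec_subspace_def by (intro eq_vecI) auto
  ultimately show ?thesis by simp
qed

lemma mat_of_cols_mult_vec_carrier[simp]: "mat_of_cols n us *\<^sub>v v \<in> carrier_vec n"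
  by (simp add: carrier_dim_vec)

lemma mat_of_cols_Cons_mult_vec:
  fixes u :: "complex vec"
  assumes u: "u \<in> carrier_vec n" and us: "set us \<subseteq> carrier_vec n"
    and c: "c \<in> carrier_vec (Suc (length us))"
  shows "mat_of_cols n (u # us) *\<^sub>v c = c $ 0 \<cdot>\<^sub>v u + mat_of_cols n us *\<^sub>v vec (length us) (\<lambda>i. c $ Suc i)"
proof (rule eq_vecI)
  fix k assume "k < dim_vec (c $ 0 \<cdot>\<^sub>v u + mat_of_cols n us *\<^sub>v vec (length us) (\<lambda>i. c $ Suc i))"
  hence k: "k < n" using u by auto
  have "(mat_of_cols n (u # us) *\<^sub>v c) $ k = (\<Sum>j\<in>{0..<Suc (length us)}. (u # us) ! j $ k * c $ j)"
    using k c by (auto simp: scalar_prod_def mat_of_cols_index row_def intro!: sum.cong)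
  also have "\<dots> = c $ 0 * u $ k + (\<Sum>j\<in>{0..<length us}. us ! j $ k * c $ Suc j)"
    by (subst sum.atLeast0_lessThan_Suc_shift) (simp add: mult.commute[of "u $ k"])
  also have "\<dots> = (c $ 0 \<cdot>\<^sub>v u + mat_of_cols n us *\<^sub>v vec (length us) (\<lambda>i. c $ Suc i)) $ k"
    using k u by (auto simp: scalar_prod_def mat_of_cols_index row_def intro!: sum.cong)
  finally show "(mat_of_cols n (u # us) *\<^sub>v c) $ k =
      (c $ 0 \<cdot>\<^sub>v u + mat_of_cols n us *\<^sub>v vec (length us) (\<lambda>i. c $ Suc i)) $ k" .
qed (use u in auto)

lemma mat_of_cols_mult_vec_in_subspace:
  assumes W: "vec_subspace n W" and us: "set us \<subseteq> W" and c: "c \<in> carrier_vec (length us)"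
  shows "mat_of_cols n us *\<^sub>v c \<in> W"
  using us c
proof (induction us arbitrary: c)
  case Nil
  have "mat_of_cols n [] *\<^sub>v c = 0\<^sub>v n"
    using Nil.prems by (intro eq_vecI) (auto simp: row_def scalar_prod_def)
  thus ?case using W unfolding vec_subspace_def by auto
next
  case (Cons u us)
  have "mat_of_cols n (u # us) *\<^sub>v c = c $ 0 \<cdot>\<^sub>v u + mat_of_cols n us *\<^sub>v vec (length us) (\<lambda>i. c $ Suc i)"
    using Cons.prems W unfolding vec_subspace_def by (intro mat_of_cols_Cons_mult_vec) auto
  moreover have "mat_of_cols n us *\<^sub>v vec (length us) (\<lambda>i. c $ Suc i) \<in> W" using Cons by auto
  moreover have "c $ 0 \<cdot>\<^sub>v u \<in> W" using W Cons.prems unfolding vec_subspace_def by auto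
  ultimately show ?case using W unfolding vec_subspace_def by auto
qed

lemma mat_adjoint_mat_of_cols_mult_vec_index:
  fixes us :: "complex vec list"
  assumes x: "x \<in> carrier_vec n" and i: "i < length us" and us: "set us \<subseteq> carrier_vec n"
  shows "(mat_adjoint (mat_of_cols n us) *\<^sub>v x) $ i = x \<bullet>c us ! i"
proof -
  have ui: "us ! i \<in> carrier_vec n" using i us nth_mem by blast
  have "(mat_adjoint (mat_of_cols n us) *\<^sub>v x) $ i = (\<Sum>j<n. cnj (us ! i $ j) * x $ j)"
    using x i ui by (simp add: scalar_prod_def mat_of_cols_index atLeast0LessThan)
  also have "\<dots> = x \<bullet>c us ! i" using x ui by (simp add: cscalar_prod_eq_sum[of _ n] mult.commute)
  finally show ?thesis .
qed

lemma orthonormal_mat_adjoint_mult: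
  assumes "orthonormal n us"
  shows "mat_adjoint (mat_of_cols n us) * mat_of_cols n us = 1\<^sub>m (length us)"
proof (rule eq_matI)
  fix i j assume ij: "i < dim_row (1\<^sub>m (length us))" "j < dim_col (1\<^sub>m (length us))"
  have c: "us ! j \<in> carrier_vec n" "us ! i \<in> carrier_vec n"
    using assms ij unfolding orthonormal_def by auto
  have "(mat_adjoint (mat_of_cols n us) * mat_of_cols n us) $$ (i,j) = us ! j \<bullet>c us ! i"
    using ij c by (auto simp: scalar_prod_def mat_of_cols_index row_def col_def mult.commute intro!: sum.cong)
  thus "(mat_adjoint (mat_of_cols n us) * mat_of_cols n us) $$ (i,j) = 1\<^sub>m (length us) $$ (i,j)"
    using assms ij unfolding orthonormal_def by auto
qed auto

lemma orthonormal_length_le: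
  assumes "orthonormal n us"
  shows "length us \<le> n"
proof -
  have U: "mat_of_cols n us \<in> carrier_mat n (length us)" by simp
  show ?thesis
    by (rule mat_right_inverse_dim_le[OF mat_adjoint_carrier[OF U] U orthonormal_mat_adjoint_mult[OF assms]])
qed

lemma orthonormal_residual_orthogonal:
  assumes o: "orthonormal n us" and x: "x \<in> carrier_vec n"
  shows "mat_adjoint (mat_of_cols n us) *\<^sub>v (x - mat_of_cols n us *\<^sub>v (mat_adjoint (mat_of_cols n us) *\<^sub>v x))
    = 0\<^sub>v (length us)"
proof -
  let ?U = "mat_of_cols n us"
  have U: "?U \<in> carrier_mat n (length us)" by auto
  have a: "mat_adjoint ?U *\<^sub>v x \<in> carrier_vec (length us)"
    using mult_mat_vec_carrier[OF mat_adjoint_carrier[OF U] x] .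
  have "mat_adjoint ?U *\<^sub>v (x - ?U *\<^sub>v (mat_adjoint ?U *\<^sub>v x))
      = mat_adjoint ?U *\<^sub>v x - (mat_adjoint ?U * ?U) *\<^sub>v (mat_adjoint ?U *\<^sub>v x)"
    using x U a assoc_mult_mat_vec[OF mat_adjoint_carrier[OF U] U a]
    by (simp add: mult_minus_distrib_mat_vec[of _ "length us" n])
  also have "\<dots> = mat_adjoint ?U *\<^sub>v x - mat_adjoint ?U *\<^sub>v x"
    using orthonormal_mat_adjoint_mult[OF o] a by simp
  finally show ?thesis using a by simp
qed

lemma orthonormal_residual_cscalar_prod:
  assumes o: "orthonormal n us" and x: "x \<in> carrier_vec n" and i: "i < length us"
  shows "(x - mat_of_cols n us *\<^sub>v (mat_adjoint (mat_of_cols n us) *\<^sub>v x)) \<bullet>c us ! i = 0"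
proof -
  let ?y = "x - mat_of_cols n us *\<^sub>v (mat_adjoint (mat_of_cols n us) *\<^sub>v x)"
  have "?y \<bullet>c us ! i = (mat_adjoint (mat_of_cols n us) *\<^sub>v ?y) $ i"
    using mat_adjoint_mat_of_cols_mult_vec_index[of ?y n i us] x i o unfolding orthonormal_def by simp
  also have "\<dots> = 0" using orthonormal_residual_orthogonal[OF o x] i by simp
  finally show ?thesis .
qed

lemma orthonormal_snoc:
  assumes o: "orthonormal n us" and u: "u \<in> carrier_vec n" and uu: "u \<bullet>c u = 1"
    and ui: "\<And>i. i < length us \<Longrightarrow> u \<bullet>c us ! i = 0"
  shows "orthonormal n (us @ [u])"
proof -
  have us: "set us \<subseteq> carrier_vec n" using o unfolding orthonormal_def by auto
  have iu: "us ! i \<bullet>c u = 0" if "i < length us" for i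
    using ui[OF that] cscalar_prod_swap[OF u, of "us ! i"] us nth_mem[OF that] by auto
  show ?thesis unfolding orthonormal_def
  proof (intro conjI allI impI)
    show "set (us @ [u]) \<subseteq> carrier_vec n" using us u by auto
    fix i j assume "i < length (us @ [u])" "j < length (us @ [u])"
    thus "(us @ [u]) ! i \<bullet>c (us @ [u]) ! j = (if i = j then 1 else 0)"
      using o ui iu uu unfolding orthonormal_def
      by (cases "i < length us"; cases "j < length us") (auto simp: nth_append)
  qed
qed

text \<open>Gram--Schmidt step: the normalised residual of a vector outside the span extends the list.\<close>
lemma orthonormal_extend:
  assumes W: "vec_subspace n W" and o: "orthonormal n us" and us: "set us \<subseteq> W"
    and xW: "x \<in> W" and ne: "mat_of_cols n us *\<^sub>v (mat_adjoint (mat_of_cols n us) *\<^sub>v x) \<noteq> x"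
  obtains u where "u \<in> W" "orthonormal n (us @ [u])"
proof -
  let ?U = "mat_of_cols n us"
  have U: "?U \<in> carrier_mat n (length us)" by simp
  have x: "x \<in> carrier_vec n" using xW W unfolding vec_subspace_def by auto
  define p where "p = ?U *\<^sub>v (mat_adjoint ?U *\<^sub>v x)"
  define y where "y = x - p"
  have p: "p \<in> carrier_vec n" unfolding p_def by simp
  have pW: "p \<in> W"
    unfolding p_def by (rule mat_of_cols_mult_vec_in_subspace[OF W us mult_mat_vec_carrier[OF mat_adjoint_carrier[OF U] x]])
  have yW: "y \<in> W" unfolding y_def by (rule vec_subspace_diff[OF W xW pW])
  have y: "y \<in> carrier_vec n" using yW W unfolding vec_subspace_def by auto
  have y0: "y \<noteq> 0\<^sub>v n"
  proof
    assume y0: "y = 0\<^sub>v n"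
    have "x = p"
    proof (rule eq_vecI)
      fix i assume i: "i < dim_vec p"
      have "(x - p) $ i = 0" using y0 p i unfolding y_def by simp
      thus "x $ i = p $ i" using p x i by simp
    qed (use x p in simp)
    thus False using ne unfolding p_def by simp
  qed
  have yorth: "y \<bullet>c us ! i = 0" if "i < length us" for i
    unfolding y_def p_def by (rule orthonormal_residual_cscalar_prod[OF o x that])
  obtain c where c: "(c \<cdot>\<^sub>v y) \<bullet>c (c \<cdot>\<^sub>v y) = 1" using exists_normalizing_scalar[OF y y0] .
  define u where "u = c \<cdot>\<^sub>v y"
  have u: "u \<in> carrier_vec n" using y unfolding u_def by auto
  have "u \<in> W" using W yW unfolding u_def vec_subspace_def by auto
  moreover have "u \<bullet>c u = 1" unfolding u_def by (rule c)
  moreover have "u \<bullet>c us ! i = 0" if "i < length us" for i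
    unfolding u_def using y yorth[OF that] o that unfolding orthonormal_def
    by (subst smult_cscalar_prod_distrib[of _ n]) auto
  ultimately show ?thesis using that orthonormal_snoc[OF o u] by blast
qed

lemma exists_orthonormal_basis:
  assumes W: "vec_subspace n W"
  obtains us where "orthonormal_basis n us W"
proof -
  define P where "P L \<longleftrightarrow> (\<exists>us. length us = L \<and> orthonormal n us \<and> set us \<subseteq> W)" for L
  have P0: "P 0" unfolding P_def orthonormal_def by auto
  have P_le: "P L \<Longrightarrow> L \<le> n" for L unfolding P_def using orthonormal_length_le by auto
  define L where "L = (GREATEST L. P L)"
  have "P L" unfolding L_def by (rule GreatestI_nat[of P 0 n, OF P0 P_le])
  then obtain us where us: "length us = L" "orthonormal n us" "set us \<subseteq> W" unfolding P_def by auto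
  have max: "P L' \<Longrightarrow> L' \<le> L" for L' unfolding L_def by (rule Greatest_le_nat[of P L' n, OF _ P_le])
  have "mat_of_cols n us *\<^sub>v (mat_adjoint (mat_of_cols n us) *\<^sub>v x) = x" if xW: "x \<in> W" for x
  proof (rule ccontr)
    assume "\<not> ?thesis"
    then obtain u where "u \<in> W" "orthonormal n (us @ [u])"
      using orthonormal_extend[OF W us(2,3) xW] by blast
    hence "P (Suc L)" unfolding P_def using us by (intro exI[of _ "us @ [u]"]) auto
    thus False using max by force
  qed
  thus ?thesis using that us unfolding orthonormal_basis_def by blast
qed

lemma orthonormal_basis_full_length:
  assumes B: "orthonormal_basis n us W" and W: "vec_subspace n W" and len: "length us = n"
  shows "W = carrier_vec n"
proof -
  let ?U = "mat_of_cols n us"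
  have o: "orthonormal n us" and us: "set us \<subseteq> W" using B unfolding orthonormal_basis_def by auto
  have U: "?U \<in> carrier_mat n n" using len by auto
  have "mat_adjoint ?U * ?U = 1\<^sub>m n" using orthonormal_mat_adjoint_mult[OF o] len by simp
  hence UU: "?U * mat_adjoint ?U = 1\<^sub>m n"
    using mat_mult_left_right_inverse[OF mat_adjoint_carrier[OF U] U] by simp
  have "x \<in> W" if x: "x \<in> carrier_vec n" for x
  proof -
    have "?U *\<^sub>v (mat_adjoint ?U *\<^sub>v x) = x" using UU x U by (subst assoc_mult_mat_vec[symmetric]) auto
    moreover have "?U *\<^sub>v (mat_adjoint ?U *\<^sub>v x) \<in> W"
      by (rule mat_of_cols_mult_vec_in_subspace[OF W us])
        (use mult_mat_vec_carrier[OF mat_adjoint_carrier[OF U] x] len in simp)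
    ultimately show ?thesis by simp
  qed
  thus ?thesis using W unfolding vec_subspace_def by auto
qed

definition orthogonal_complement :: "nat \<Rightarrow> complex vec set \<Rightarrow> complex vec set" where
  "orthogonal_complement n W = {v \<in> carrier_vec n. \<forall>w\<in>W. v \<bullet>c w = 0}"

lemma vec_subspace_orthogonal_complement:
  "W \<subseteq> carrier_vec n \<Longrightarrow> vec_subspace n (orthogonal_complement n W)"
  unfolding vec_subspace_def orthogonal_complement_def
  by (auto simp: add_cscalar_prod_distrib[of _ n] smult_cscalar_prod_distrib[of _ n] subset_iff)

lemma orthogonal_complement_inter:
  assumes "W \<subseteq> carrier_vec n" "w \<in> W" "w \<in> orthogonal_complement n W"
  shows "w = 0\<^sub>v n"
  using assms cscalar_prod_self_eq_0_iff[of w n] unfolding orthogonal_complement_def by auto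

lemma orthonormal_basis_residual_in_complement:
  assumes W: "vec_subspace n W" and B: "orthonormal_basis n us W" and x: "x \<in> carrier_vec n"
  shows "x - mat_of_cols n us *\<^sub>v (mat_adjoint (mat_of_cols n us) *\<^sub>v x) \<in> orthogonal_complement n W"
proof -
  let ?U = "mat_of_cols n us"
  have U: "?U \<in> carrier_mat n (length us)" by auto
  have o: "orthonormal n us" and fix_W: "\<And>w. w \<in> W \<Longrightarrow> ?U *\<^sub>v (mat_adjoint ?U *\<^sub>v w) = w"
    using B unfolding orthonormal_basis_def by auto
  define y where "y = x - ?U *\<^sub>v (mat_adjoint ?U *\<^sub>v x)"
  have y: "y \<in> carrier_vec n" unfolding y_def using x by simp
  have "y \<bullet>c w = 0" if w: "w \<in> W" for w
  proof -
    have wc: "w \<in> carrier_vec n" using w W unfolding vec_subspace_def by auto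
    have "y \<bullet>c w = y \<bullet>c (?U *\<^sub>v (mat_adjoint ?U *\<^sub>v w))" using fix_W w by simp
    also have "\<dots> = (mat_adjoint ?U *\<^sub>v y) \<bullet>c (mat_adjoint ?U *\<^sub>v w)"
      using cscalar_prod_mult_mat_vec[OF mat_adjoint_carrier[OF U] y
          mult_mat_vec_carrier[OF mat_adjoint_carrier[OF U] wc]] by simp
    also have "mat_adjoint ?U *\<^sub>v y = 0\<^sub>v (length us)"
      unfolding y_def by (rule orthonormal_residual_orthogonal[OF o x])
    finally show ?thesis using mult_mat_vec_carrier[OF mat_adjoint_carrier[OF U] wc] by simp
  qed
  thus ?thesis unfolding orthogonal_complement_def y_def[symmetric] using y by auto
qed

lemma orthonormal_basis_complement_mult_vec:
  assumes B: "orthonormal_basis n vs (orthogonal_complement n W)" and p: "p \<in> W" and W: "W \<subseteq> carrier_vec n"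
  shows "mat_adjoint (mat_of_cols n vs) *\<^sub>v p = 0\<^sub>v (length vs)"
proof (rule eq_vecI)
  have vs: "set vs \<subseteq> orthogonal_complement n W" using B unfolding orthonormal_basis_def by auto
  have pc: "p \<in> carrier_vec n" using p W by auto
  fix i assume "i < dim_vec (0\<^sub>v (length vs))"
  hence i: "i < length vs" by simp
  have vi: "vs ! i \<in> orthogonal_complement n W" using vs i by auto
  have vic: "vs ! i \<in> carrier_vec n" using vi unfolding orthogonal_complement_def by auto
  have "(mat_adjoint (mat_of_cols n vs) *\<^sub>v p) $ i = p \<bullet>c vs ! i"
    using mat_adjoint_mat_of_cols_mult_vec_index[OF pc i] vs unfolding orthogonal_complement_def by auto
  also have "\<dots> = cnj (vs ! i \<bullet>c p)" by (rule cscalar_prod_swap[OF vic pc])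
  also have "vs ! i \<bullet>c p = 0" using vi p unfolding orthogonal_complement_def by auto
  finally show "(mat_adjoint (mat_of_cols n vs) *\<^sub>v p) $ i = 0\<^sub>v (length vs) $ i" using i by simp
qed simp

lemma orthonormal_bases_complement_sum:
  assumes W: "vec_subspace n W"
    and B1: "orthonormal_basis n us W"
    and B2: "orthonormal_basis n vs (orthogonal_complement n W)"
  shows "mat_of_cols n us * mat_adjoint (mat_of_cols n us) +
    mat_of_cols n vs * mat_adjoint (mat_of_cols n vs) = 1\<^sub>m n"
proof (rule mat_eq_by_mult_vec)
  let ?U1 = "mat_of_cols n us" and ?U2 = "mat_of_cols n vs"
  have U1: "?U1 \<in> carrier_mat n (length us)" and U2: "?U2 \<in> carrier_mat n (length vs)" by auto
  show "?U1 * mat_adjoint ?U1 + ?U2 * mat_adjoint ?U2 \<in> carrier_mat n n" using U1 U2 by auto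
  show "1\<^sub>m n \<in> carrier_mat n n" by simp
  fix x :: "complex vec" assume x: "x \<in> carrier_vec n"
  define p where "p = ?U1 *\<^sub>v (mat_adjoint ?U1 *\<^sub>v x)"
  define y where "y = x - p"
  have p: "p \<in> carrier_vec n" and y: "y \<in> carrier_vec n" unfolding y_def p_def using x by simp_all
  have xpy: "x = p + y" unfolding y_def using x p by (intro eq_vecI) auto
  have "p \<in> W"
    using B1 mat_of_cols_mult_vec_in_subspace[OF W _ mult_mat_vec_carrier[OF mat_adjoint_carrier[OF U1] x]]
    unfolding p_def orthonormal_basis_def by blast
  hence "mat_adjoint ?U2 *\<^sub>v p = 0\<^sub>v (length vs)"
    using orthonormal_basis_complement_mult_vec[OF B2] W unfolding vec_subspace_def by blast
  moreover have "?U2 *\<^sub>v (mat_adjoint ?U2 *\<^sub>v y) = y"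
    using B2 orthonormal_basis_residual_in_complement[OF W B1 x] unfolding orthonormal_basis_def y_def p_def by blast
  ultimately have "?U2 *\<^sub>v (mat_adjoint ?U2 *\<^sub>v x) = y"
    unfolding xpy using p y U2 mult_mat_vec_carrier[OF mat_adjoint_carrier[OF U2] y]
    by (simp add: mult_add_distrib_mat_vec[of _ "length vs" n])
  hence "(?U1 * mat_adjoint ?U1 + ?U2 * mat_adjoint ?U2) *\<^sub>v x = p + y"
    unfolding p_def
    using add_mult_distrib_mat_vec[OF mult_carrier_mat[OF U1 mat_adjoint_carrier[OF U1]]
        mult_carrier_mat[OF U2 mat_adjoint_carrier[OF U2]] x]
      assoc_mult_mat_vec[OF U1 mat_adjoint_carrier[OF U1] x] assoc_mult_mat_vec[OF U2 mat_adjoint_carrier[OF U2] x]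
    by simp
  thus "(?U1 * mat_adjoint ?U1 + ?U2 * mat_adjoint ?U2) *\<^sub>v x = 1\<^sub>m n *\<^sub>v x" using xpy x by simp
qed

lemma mat_eq_0_if_mult_complementary_bases_eq_0:
  fixes T :: "complex mat"
  assumes T: "T \<in> carrier_mat k n" and W: "vec_subspace n W"
    and B1: "orthonormal_basis n us W" and B2: "orthonormal_basis n vs (orthogonal_complement n W)"
    and T1: "T * mat_of_cols n us = 0\<^sub>m k (length us)" and T2: "T * mat_of_cols n vs = 0\<^sub>m k (length vs)"
  shows "T = 0\<^sub>m k n"
proof -
  let ?U1 = "mat_of_cols n us" and ?U2 = "mat_of_cols n vs"
  have U1: "?U1 \<in> carrier_mat n (length us)" and U2: "?U2 \<in> carrier_mat n (length vs)" by auto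
  have "T = T * (?U1 * mat_adjoint ?U1 + ?U2 * mat_adjoint ?U2)"
    using orthonormal_bases_complement_sum[OF W B1 B2] T by simp
  also have "\<dots> = T * ?U1 * mat_adjoint ?U1 + T * ?U2 * mat_adjoint ?U2"
    using mult_add_distrib_mat[OF T mult_carrier_mat[OF U1 mat_adjoint_carrier[OF U1]]
        mult_carrier_mat[OF U2 mat_adjoint_carrier[OF U2]]]
      assoc_mult_mat[OF T U1 mat_adjoint_carrier[OF U1]] assoc_mult_mat[OF T U2 mat_adjoint_carrier[OF U2]]
    by simp
  also have "\<dots> = 0\<^sub>m k n" using T1 T2 U1 U2 by simp
  finally show ?thesis .
qed

lemma orthogonal_complement_ne_carrier:
  assumes W: "vec_subspace n W" and ne: "W \<noteq> {0\<^sub>v n}"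
  shows "orthogonal_complement n W \<noteq> carrier_vec n"
  using W ne orthogonal_complement_inter[of W n] unfolding vec_subspace_def by blast

definition mat_sum :: "nat \<Rightarrow> nat \<Rightarrow> ('b \<Rightarrow> 'a :: comm_ring_1 mat) \<Rightarrow> 'b set \<Rightarrow> 'a mat" where
  "mat_sum r c F S = mat r c (\<lambda>(i,j). \<Sum>g\<in>S. F g $$ (i,j))"

lemma mat_sum_carrier[simp]: "mat_sum r c F S \<in> carrier_mat r c"
  unfolding mat_sum_def by auto

lemma dim_mat_sum[simp]: "dim_row (mat_sum r c F S) = r" "dim_col (mat_sum r c F S) = c"
  unfolding mat_sum_def by auto

lemma index_mat_sum[simp]: "i < r \<Longrightarrow> j < c \<Longrightarrow> mat_sum r c F S $$ (i,j) = (\<Sum>g\<in>S. F g $$ (i,j))"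
  unfolding mat_sum_def by auto

lemma mult_mat_sum:
  assumes B: "B \<in> carrier_mat k r" and F: "\<And>g. g \<in> S \<Longrightarrow> F g \<in> carrier_mat r c"
  shows "B * mat_sum r c F S = mat_sum k c (\<lambda>g. B * F g) S"
proof (rule eq_matI)
  fix i j assume ij: "i < dim_row (mat_sum k c (\<lambda>g. B * F g) S)" "j < dim_col (mat_sum k c (\<lambda>g. B * F g) S)"
  have "(B * mat_sum r c F S) $$ (i,j) = (\<Sum>l<r. B $$ (i,l) * (\<Sum>g\<in>S. F g $$ (l,j)))"
    using ij B by (auto simp: scalar_prod_def atLeast0LessThan intro!: sum.cong)
  also have "\<dots> = (\<Sum>g\<in>S. \<Sum>l<r. B $$ (i,l) * F g $$ (l,j))"
    by (simp add: sum_distrib_left sum.swap[of _ S])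
  also have "\<dots> = mat_sum k c (\<lambda>g. B * F g) S $$ (i,j)"
    using ij B by (auto simp: scalar_prod_def atLeast0LessThan dest!: F intro!: sum.cong)
  finally show "(B * mat_sum r c F S) $$ (i,j) = mat_sum k c (\<lambda>g. B * F g) S $$ (i,j)" .
qed (use B in auto)

lemma mat_sum_mult:
  assumes B: "B \<in> carrier_mat c k" and F: "\<And>g. g \<in> S \<Longrightarrow> F g \<in> carrier_mat r c"
  shows "mat_sum r c F S * B = mat_sum r k (\<lambda>g. F g * B) S"
proof (rule eq_matI)
  fix i j assume ij: "i < dim_row (mat_sum r k (\<lambda>g. F g * B) S)" "j < dim_col (mat_sum r k (\<lambda>g. F g * B) S)"
  have "(mat_sum r c F S * B) $$ (i,j) = (\<Sum>l<c. (\<Sum>g\<in>S. F g $$ (i,l)) * B $$ (l,j))"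
    using ij B by (auto simp: scalar_prod_def atLeast0LessThan intro!: sum.cong)
  also have "\<dots> = (\<Sum>g\<in>S. \<Sum>l<c. F g $$ (i,l) * B $$ (l,j))"
    by (simp add: sum_distrib_right sum.swap[of _ S])
  also have "\<dots> = mat_sum r k (\<lambda>g. F g * B) S $$ (i,j)"
    using ij B by (auto simp: scalar_prod_def atLeast0LessThan dest!: F intro!: sum.cong)
  finally show "(mat_sum r c F S * B) $$ (i,j) = mat_sum r k (\<lambda>g. F g * B) S $$ (i,j)" .
qed (use B in auto)

lemma mat_sum_cong: "(\<And>g. g \<in> S \<Longrightarrow> F g = F' g) \<Longrightarrow> mat_sum r c F S = mat_sum r c F' S"
  unfolding mat_sum_def by (intro eq_matI) auto

lemma mat_sum_reindex_bij_betw: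
  assumes "bij_betw h S S"
  shows "mat_sum r c (\<lambda>g. F (h g)) S = mat_sum r c F S"
  unfolding mat_sum_def using sum.reindex_bij_betw[OF assms] by (intro eq_matI) auto

lemma mat_sum_mult_vec_index:
  assumes "\<And>g. g \<in> S \<Longrightarrow> F g \<in> carrier_mat r c" "v \<in> carrier_vec c" "i < r"
  shows "(mat_sum r c F S *\<^sub>v v) $ i = (\<Sum>g\<in>S. (F g *\<^sub>v v) $ i)"
  using assms(2,3)
  by (auto simp: scalar_prod_def sum_distrib_right sum.swap[of _ S] dest!: assms(1) intro!: sum.cong)

lemma mat_sum_cscalar_prod:
  fixes F :: "'b \<Rightarrow> complex mat"
  assumes F: "\<And>g. g \<in> S \<Longrightarrow> F g \<in> carrier_mat n n" and v: "v \<in> carrier_vec n"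
  shows "(mat_sum n n F S *\<^sub>v v) \<bullet>c v = (\<Sum>g\<in>S. (F g *\<^sub>v v) \<bullet>c v)"
proof -
  have "(mat_sum n n F S *\<^sub>v v) \<bullet>c v = (\<Sum>i<n. (mat_sum n n F S *\<^sub>v v) $ i * cnj (v $ i))"
    by (rule cscalar_prod_eq_sum[OF mult_mat_vec_carrier[OF mat_sum_carrier v] v])
  also have "\<dots> = (\<Sum>i<n. (\<Sum>g\<in>S. (F g *\<^sub>v v) $ i) * cnj (v $ i))"
    using mat_sum_mult_vec_index[of S F n n v] F v by (intro sum.cong) (auto simp del: index_mult_mat_vec)
  also have "\<dots> = (\<Sum>g\<in>S. \<Sum>i<n. (F g *\<^sub>v v) $ i * cnj (v $ i))"
    by (simp add: sum_distrib_right sum.swap[of _ S])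
  also have "\<dots> = (\<Sum>g\<in>S. (F g *\<^sub>v v) \<bullet>c v)"
  proof (rule sum.cong[OF refl])
    fix g assume "g \<in> S"
    show "(\<Sum>i<n. (F g *\<^sub>v v) $ i * cnj (v $ i)) = (F g *\<^sub>v v) \<bullet>c v"
      by (rule cscalar_prod_eq_sum[symmetric, OF mult_mat_vec_carrier[OF F[OF \<open>g \<in> S\<close>] v] v])
  qed
  finally show ?thesis .
qed

lemma mat_tr_mult_comm:
  assumes X: "X \<in> carrier_mat n m" and Y: "Y \<in> carrier_mat m n"
  shows "mat_tr (X * Y) = mat_tr (Y * X)"
proof -
  have "mat_tr (X * Y) = (\<Sum>i<n. \<Sum>k<m. X $$ (i,k) * Y $$ (k,i))"
    using X Y unfolding mat_tr_def by (auto simp: scalar_prod_def atLeast0LessThan)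
  also have "\<dots> = (\<Sum>k<m. \<Sum>i<n. Y $$ (k,i) * X $$ (i,k))"
    by (subst sum.swap) (simp add: mult.commute)
  also have "\<dots> = mat_tr (Y * X)"
    using X Y unfolding mat_tr_def by (auto simp: scalar_prod_def atLeast0LessThan)
  finally show ?thesis .
qed

lemma mat_tr_one[simp]: "mat_tr (1\<^sub>m n) = of_nat n"
  unfolding mat_tr_def by simp

lemma mat_tr_smult: "A \<in> carrier_mat n n \<Longrightarrow> mat_tr (c \<cdot>\<^sub>m A) = c * mat_tr A"
  unfolding mat_tr_def by (auto simp: sum_distrib_left intro!: sum.cong)

lemma mat_tr_mat_adjoint: "A \<in> carrier_mat n n \<Longrightarrow> mat_tr (mat_adjoint A) = cnj (mat_tr A)"
  unfolding mat_tr_def by auto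

lemma mat_tr_mat_sum:
  assumes "\<And>g. g \<in> S \<Longrightarrow> F g \<in> carrier_mat n n"
  shows "mat_tr (mat_sum n n F S) = (\<Sum>g\<in>S. mat_tr (F g))"
  unfolding mat_tr_def using assms by (auto simp: sum.swap[of _ S] intro!: sum.cong)

lemma mat_tr_one_by_one: "A \<in> carrier_mat 1 1 \<Longrightarrow> mat_tr A = A $$ (0,0)"
  unfolding mat_tr_def by auto

lemma mat_left_inverse_if_injective:
  fixes A :: "complex mat"
  assumes A: "A \<in> carrier_mat e d"
    and inj: "\<And>v. v \<in> carrier_vec d \<Longrightarrow> A *\<^sub>v v = 0\<^sub>v e \<Longrightarrow> v = 0\<^sub>v d"
  obtains C where "C \<in> carrier_mat d e" "C * A = 1\<^sub>m d"
proof -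
  let ?M = "mat_adjoint A * A"
  have M: "?M \<in> carrier_mat d d" using A by auto
  have "det ?M \<noteq> 0"
  proof
    assume "det ?M = 0"
    then obtain v where v: "v \<in> carrier_vec d" "v \<noteq> 0\<^sub>v d" "?M *\<^sub>v v = 0\<^sub>v d"
      using det_0_iff_vec_prod_zero_field[OF M] by auto
    have Av: "A *\<^sub>v v \<in> carrier_vec e" using A v by auto
    have "(A *\<^sub>v v) \<bullet>c (A *\<^sub>v v) = v \<bullet>c (?M *\<^sub>v v)"
      using cscalar_prod_mult_mat_vec[OF A v(1) Av] assoc_mult_mat_vec[OF mat_adjoint_carrier[OF A] A v(1)]
      by simp
    also have "\<dots> = 0" using v by simp
    finally have "A *\<^sub>v v = 0\<^sub>v e" using cscalar_prod_self_eq_0_iff[OF Av] by simp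
    thus False using inj v by auto
  qed
  from det_non_zero_imp_unit[OF M this, of "()"]
  obtain B where B: "B \<in> carrier_mat d d" "B * ?M = 1\<^sub>m d"
    unfolding Units_def ring_mat_def by auto
  have "(B * mat_adjoint A) * A = 1\<^sub>m d"
    using B assoc_mult_mat[OF B(1) mat_adjoint_carrier[OF A] A] by simp
  moreover have "B * mat_adjoint A \<in> carrier_mat d e" using B A by auto
  ultimately show ?thesis using that by blast
qed

lemma mat_right_inverse_if_surjective:
  fixes A :: "'a :: comm_ring_1 mat"
  assumes A: "A \<in> carrier_mat e d"
    and surj: "\<And>w. w \<in> carrier_vec e \<Longrightarrow> \<exists>v\<in>carrier_vec d. A *\<^sub>v v = w"
  obtains B where "B \<in> carrier_mat d e" "A * B = 1\<^sub>m e"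
proof -
  define b where "b j = (SOME v. v \<in> carrier_vec d \<and> A *\<^sub>v v = unit_vec e j)" for j
  have b: "b j \<in> carrier_vec d \<and> A *\<^sub>v b j = unit_vec e j" if "j < e" for j
    unfolding b_def by (rule someI_ex) (use surj[of "unit_vec e j"] that in auto)
  define B where "B = mat_of_cols d (map b [0..<e])"
  have B: "B \<in> carrier_mat d e" unfolding B_def by auto
  have "A * B = 1\<^sub>m e"
  proof (rule mat_col_eqI)
    fix j assume "j < dim_col (1\<^sub>m e)"
    hence j: "j < e" by simp
    have "col B j = b j" unfolding B_def using b[OF j] j by simp
    thus "col (A * B) j = col (1\<^sub>m e) j" using col_mult2[OF A B j] b[OF j] j by simp
  qed (use A B in auto)
  thus ?thesis using that B by blast
qed

section \<open>Matrix representations\<close>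

lemma is_rep_carrier: "is_rep G n \<rho> \<Longrightarrow> g \<in> carrier G \<Longrightarrow> \<rho> g \<in> carrier_mat n n"
  unfolding is_rep_def by auto

lemma is_rep_one: "is_rep G n \<rho> \<Longrightarrow> \<rho> \<one>\<^bsub>G\<^esub> = 1\<^sub>m n"
  unfolding is_rep_def by auto

lemma is_rep_mult:
  "is_rep G n \<rho> \<Longrightarrow> g \<in> carrier G \<Longrightarrow> h \<in> carrier G \<Longrightarrow> \<rho> (g \<otimes>\<^bsub>G\<^esub> h) = \<rho> g * \<rho> h"
  unfolding is_rep_def by auto

lemma irreducible_rep_is_rep: "irreducible_rep G n \<rho> \<Longrightarrow> is_rep G n \<rho>"
  unfolding irreducible_rep_def by auto

lemma irreducible_rep_dim_pos: "irreducible_rep G n \<rho> \<Longrightarrow> n > 0"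
  unfolding irreducible_rep_def by auto

definition unitary_rep :: "'a monoid \<Rightarrow> nat \<Rightarrow> ('a \<Rightarrow> complex mat) \<Rightarrow> bool" where
  "unitary_rep G n \<rho> \<longleftrightarrow> is_rep G n \<rho> \<and> (\<forall>g\<in>carrier G. mat_adjoint (\<rho> g) = \<rho> (inv\<^bsub>G\<^esub> g))"

text \<open>The representation-theoretic notions are stated for groups of type \<open>'a monoid\<close>,
  i.e. monoid records without further fields.\<close>
locale plain_group = group G for G :: "'a monoid" (structure)

context plain_group
begin

lemma is_rep_inv_right: "is_rep G n \<rho> \<Longrightarrow> g \<in> carrier G \<Longrightarrow> \<rho> g * \<rho> (inv g) = 1\<^sub>m n"
  using is_rep_mult[of G n \<rho> g "inv g"] is_rep_one[of G n \<rho>] by simp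

lemma is_rep_inv_left: "is_rep G n \<rho> \<Longrightarrow> g \<in> carrier G \<Longrightarrow> \<rho> (inv g) * \<rho> g = 1\<^sub>m n"
  using is_rep_mult[of G n \<rho> "inv g" g] is_rep_one[of G n \<rho>] by simp

lemma inv_mult_cancel_left: "x \<in> carrier G \<Longrightarrow> a \<in> carrier G \<Longrightarrow> inv x \<otimes> (x \<otimes> a) = a"
  by (simp add: m_assoc[symmetric])

lemma mult_inv_cancel_left: "x \<in> carrier G \<Longrightarrow> a \<in> carrier G \<Longrightarrow> x \<otimes> (inv x \<otimes> a) = a"
  by (simp add: m_assoc[symmetric])

lemma bij_betw_mult_right: "h \<in> carrier G \<Longrightarrow> bij_betw (\<lambda>g. g \<otimes> h) (carrier G) (carrier G)"
  by (rule bij_betw_byWitness[where f' = "\<lambda>g. g \<otimes> inv h"]) (auto simp: m_assoc)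

lemma bij_betw_mult_left: "h \<in> carrier G \<Longrightarrow> bij_betw (\<lambda>g. h \<otimes> g) (carrier G) (carrier G)"
  by (rule bij_betw_byWitness[where f' = "\<lambda>g. inv h \<otimes> g"]) (auto simp: inv_mult_cancel_left mult_inv_cancel_left)

lemma bij_betw_inv: "bij_betw (\<lambda>g. inv g) (carrier G) (carrier G)"
  by (rule bij_betw_byWitness[where f' = "\<lambda>g. inv g"]) auto

lemma bij_betw_conjugation: "x \<in> carrier G \<Longrightarrow> bij_betw (\<lambda>g. x \<otimes> g \<otimes> inv x) (carrier G) (carrier G)"
  using bij_betw_trans[OF bij_betw_mult_left bij_betw_mult_right[of "inv x"]] by (simp add: o_def)

lemma mat_tr_rep_conjugate:
  assumes rep: "is_rep G n \<rho>" and g: "g \<in> carrier G" and x: "x \<in> carrier G"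
  shows "mat_tr (\<rho> (x \<otimes> g \<otimes> inv x)) = mat_tr (\<rho> g)"
proof -
  have rc: "\<And>g. g \<in> carrier G \<Longrightarrow> \<rho> g \<in> carrier_mat n n" using is_rep_carrier[OF rep] .
  have xi: "inv x \<in> carrier G" using x by simp
  have "\<rho> (x \<otimes> g \<otimes> inv x) = \<rho> x * (\<rho> g * \<rho> (inv x))"
    using is_rep_mult[OF rep] g x xi rc by (simp add: assoc_mult_mat[of _ n n _ n _ n])
  hence "mat_tr (\<rho> (x \<otimes> g \<otimes> inv x)) = mat_tr ((\<rho> g * \<rho> (inv x)) * \<rho> x)"
    using mat_tr_mult_comm[OF rc[OF x] mult_carrier_mat[OF rc[OF g] rc[OF xi]]] by simp
  also have "(\<rho> g * \<rho> (inv x)) * \<rho> x = \<rho> g"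
    using is_rep_inv_left[OF rep x] rc[OF g] rc[OF x] rc[OF xi]
    by (simp add: assoc_mult_mat[of _ n n _ n _ n])
  finally show ?thesis .
qed

text \<open>Averaging \<open>\<rho>(g)\<^sup>* \<rho>(g)\<close> over the group gives a positive definite matrix \<open>P\<close> with
  \<open>\<rho>(h)\<^sup>* P \<rho>(h) = P\<close>, so \<open>\<rho>(h)\<^sup>*\<close> is conjugate to \<open>\<rho>(h\<inverse>)\<close>.\<close>
definition invariant_form :: "nat \<Rightarrow> ('a \<Rightarrow> complex mat) \<Rightarrow> complex mat" where
  "invariant_form n \<rho> = mat_sum n n (\<lambda>g. mat_adjoint (\<rho> g) * \<rho> g) (carrier G)"

lemma invariant_form_carrier: "invariant_form n \<rho> \<in> carrier_mat n n"
  unfolding invariant_form_def by simp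

lemma invariant_form_invariant:
  assumes rep: "is_rep G n \<rho>" and h: "h \<in> carrier G"
  shows "mat_adjoint (\<rho> h) * invariant_form n \<rho> * \<rho> h = invariant_form n \<rho>"
proof -
  have rc: "\<And>g. g \<in> carrier G \<Longrightarrow> \<rho> g \<in> carrier_mat n n" using is_rep_carrier[OF rep] .
  have ac: "\<And>g. g \<in> carrier G \<Longrightarrow> mat_adjoint (\<rho> g) * \<rho> g \<in> carrier_mat n n"
    using rc by (metis mat_adjoint_carrier mult_carrier_mat)
  have "mat_adjoint (\<rho> h) * invariant_form n \<rho>
      = mat_sum n n (\<lambda>g. mat_adjoint (\<rho> h) * (mat_adjoint (\<rho> g) * \<rho> g)) (carrier G)"
    unfolding invariant_form_def using rc h ac by (intro mult_mat_sum) auto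
  also have "\<dots> * \<rho> h
      = mat_sum n n (\<lambda>g. mat_adjoint (\<rho> h) * (mat_adjoint (\<rho> g) * \<rho> g) * \<rho> h) (carrier G)"
    using rc h ac by (intro mat_sum_mult) (auto intro!: mult_carrier_mat[of _ n n _ n])
  also have "\<dots> = mat_sum n n (\<lambda>g. (\<lambda>g. mat_adjoint (\<rho> g) * \<rho> g) (g \<otimes> h)) (carrier G)"
  proof (rule mat_sum_cong)
    fix g assume g: "g \<in> carrier G"
    have "mat_adjoint (\<rho> h) * (mat_adjoint (\<rho> g) * \<rho> g) * \<rho> h
        = (mat_adjoint (\<rho> h) * mat_adjoint (\<rho> g)) * (\<rho> g * \<rho> h)"
      using assoc_mult_mat[OF mat_adjoint_carrier[OF rc[OF h]] mult_carrier_mat[OF mat_adjoint_carrier[OF rc[OF g]] rc[OF g]] rc[OF h]]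
        assoc_mult_mat[OF mat_adjoint_carrier[OF rc[OF g]] rc[OF g] rc[OF h]]
        assoc_mult_mat[OF mat_adjoint_carrier[OF rc[OF h]] mat_adjoint_carrier[OF rc[OF g]] mult_carrier_mat[OF rc[OF g] rc[OF h]]]
      by simp
    also have "\<dots> = mat_adjoint (\<rho> (g \<otimes> h)) * \<rho> (g \<otimes> h)"
      using is_rep_mult[OF rep g h] mat_adjoint_mult[OF rc[OF g] rc[OF h]] by simp
    finally show "mat_adjoint (\<rho> h) * (mat_adjoint (\<rho> g) * \<rho> g) * \<rho> h
        = (\<lambda>g. mat_adjoint (\<rho> g) * \<rho> g) (g \<otimes> h)" by simp
  qed
  also have "\<dots> = invariant_form n \<rho>"
    unfolding invariant_form_def by (rule mat_sum_reindex_bij_betw[OF bij_betw_mult_right[OF h]])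
  finally show ?thesis .
qed

lemma invariant_form_det_nonzero:
  assumes fin: "finite (carrier G)" and rep: "is_rep G n \<rho>"
  shows "det (invariant_form n \<rho>) \<noteq> 0"
proof
  let ?P = "invariant_form n \<rho>"
  have rc: "\<And>g. g \<in> carrier G \<Longrightarrow> \<rho> g \<in> carrier_mat n n" using is_rep_carrier[OF rep] .
  assume "det ?P = 0"
  then obtain v where v: "v \<in> carrier_vec n" "v \<noteq> 0\<^sub>v n" "?P *\<^sub>v v = 0\<^sub>v n"
    using det_0_iff_vec_prod_zero_field[OF invariant_form_carrier] by auto
  have "(?P *\<^sub>v v) \<bullet>c v = (\<Sum>g\<in>carrier G. (\<rho> g *\<^sub>v v) \<bullet>c (\<rho> g *\<^sub>v v))"
    unfolding invariant_form_def
  proof (subst mat_sum_cscalar_prod[OF _ v(1)])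
    show "(\<Sum>g\<in>carrier G. ((mat_adjoint (\<rho> g) * \<rho> g) *\<^sub>v v) \<bullet>c v)
        = (\<Sum>g\<in>carrier G. (\<rho> g *\<^sub>v v) \<bullet>c (\<rho> g *\<^sub>v v))"
    proof (rule sum.cong[OF refl])
      fix g assume g: "g \<in> carrier G"
      have "((mat_adjoint (\<rho> g) * \<rho> g) *\<^sub>v v) \<bullet>c v = (mat_adjoint (\<rho> g) *\<^sub>v (\<rho> g *\<^sub>v v)) \<bullet>c v"
        using assoc_mult_mat_vec[OF mat_adjoint_carrier[OF rc[OF g]] rc[OF g] v(1)] by simp
      also have "\<dots> = (\<rho> g *\<^sub>v v) \<bullet>c (\<rho> g *\<^sub>v v)"
        using cscalar_prod_mult_mat_vec[OF mat_adjoint_carrier[OF rc[OF g]] mult_mat_vec_carrier[OF rc[OF g] v(1)] v(1)]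
        by simp
      finally show "((mat_adjoint (\<rho> g) * \<rho> g) *\<^sub>v v) \<bullet>c v = (\<rho> g *\<^sub>v v) \<bullet>c (\<rho> g *\<^sub>v v)" .
    qed
  qed (metis rc mat_adjoint_carrier mult_carrier_mat)
  hence "Re ((?P *\<^sub>v v) \<bullet>c v) = (\<Sum>g\<in>carrier G. Re ((\<rho> g *\<^sub>v v) \<bullet>c (\<rho> g *\<^sub>v v)))"
    by (simp add: Re_sum)
  also have "\<dots> \<ge> Re ((\<rho> \<one> *\<^sub>v v) \<bullet>c (\<rho> \<one> *\<^sub>v v))"
    using fin by (intro member_le_sum) (auto intro: cscalar_prod_self_real)
  finally have "Re ((?P *\<^sub>v v) \<bullet>c v) \<ge> Re (v \<bullet>c v)" using is_rep_one[OF rep] v(1) by simp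
  moreover have "Re (v \<bullet>c v) > 0" by (rule cscalar_prod_self_pos[OF v(1,2)])
  ultimately show False using v(1,3) by simp
qed

lemma mat_tr_rep_inv:
  assumes fin: "finite (carrier G)" and rep: "is_rep G n \<rho>" and h: "h \<in> carrier G"
  shows "mat_tr (\<rho> (inv h)) = cnj (mat_tr (\<rho> h))"
proof -
  let ?P = "invariant_form n \<rho>"
  have rc: "\<And>g. g \<in> carrier G \<Longrightarrow> \<rho> g \<in> carrier_mat n n" using is_rep_carrier[OF rep] .
  have P: "?P \<in> carrier_mat n n" by (rule invariant_form_carrier)
  have hi: "inv h \<in> carrier G" using h by simp
  obtain Q where Q: "Q \<in> carrier_mat n n" "Q * ?P = 1\<^sub>m n" "?P * Q = 1\<^sub>m n"
    using det_non_zero_imp_unit[OF P invariant_form_det_nonzero[OF fin rep], of "()"]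
    unfolding Units_def ring_mat_def by auto
  have "mat_adjoint (\<rho> h) * ?P = mat_adjoint (\<rho> h) * ?P * (\<rho> h * \<rho> (inv h))"
    using is_rep_inv_right[OF rep h] P rc[OF h] by simp
  also have "\<dots> = (mat_adjoint (\<rho> h) * ?P * \<rho> h) * \<rho> (inv h)"
    using P rc[OF h] rc[OF hi] by (simp add: assoc_mult_mat[of _ n n _ n _ n])
  also have "\<dots> = ?P * \<rho> (inv h)" using invariant_form_invariant[OF rep h] by simp
  finally have adjoint_P: "mat_adjoint (\<rho> h) * ?P = ?P * \<rho> (inv h)" .
  have "mat_adjoint (\<rho> h) = mat_adjoint (\<rho> h) * ?P * Q"
    using Q rc[OF h] P by (simp add: assoc_mult_mat[of _ n n _ n _ n])
  also have "\<dots> = ?P * \<rho> (inv h) * Q" using adjoint_P by simp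
  finally have "mat_adjoint (\<rho> h) = ?P * \<rho> (inv h) * Q" .
  hence "cnj (mat_tr (\<rho> h)) = mat_tr (Q * (?P * \<rho> (inv h)))"
    using mat_tr_mat_adjoint[OF rc[OF h]] mat_tr_mult_comm[of "?P * \<rho> (inv h)" n n Q] Q P rc[OF hi]
    by simp
  also have "Q * (?P * \<rho> (inv h)) = \<rho> (inv h)"
    using Q P rc[OF hi] by (simp add: assoc_mult_mat[symmetric, of _ n n _ n _ n])
  finally show ?thesis by simp
qed

subsection \<open>Schur's lemma\<close>

lemma intertwiner_kernel_invariant:
  assumes \<sigma>: "is_rep G d \<sigma>" and \<tau>: "is_rep G e \<tau>" and A: "A \<in> carrier_mat e d"
    and comm: "\<And>g. g \<in> carrier G \<Longrightarrow> \<tau> g * A = A * \<sigma> g"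
  shows "invariant_subspace G d \<sigma> {v \<in> carrier_vec d. A *\<^sub>v v = 0\<^sub>v e}"
  unfolding invariant_subspace_def
proof (intro conjI ballI allI)
  show "{v \<in> carrier_vec d. A *\<^sub>v v = 0\<^sub>v e} \<subseteq> carrier_vec d" by auto
  show "0\<^sub>v d \<in> {v \<in> carrier_vec d. A *\<^sub>v v = 0\<^sub>v e}" using A by (simp add: mult_mat_vec_zero)
next
  fix x y assume "x \<in> {v \<in> carrier_vec d. A *\<^sub>v v = 0\<^sub>v e}" "y \<in> {v \<in> carrier_vec d. A *\<^sub>v v = 0\<^sub>v e}"
  thus "x + y \<in> {v \<in> carrier_vec d. A *\<^sub>v v = 0\<^sub>v e}" using mult_add_distrib_mat_vec[OF A] by auto
next
  fix c :: complex and x assume "x \<in> {v \<in> carrier_vec d. A *\<^sub>v v = 0\<^sub>v e}"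
  thus "c \<cdot>\<^sub>v x \<in> {v \<in> carrier_vec d. A *\<^sub>v v = 0\<^sub>v e}" using mult_mat_vec[OF A] by auto
next
  fix g x assume g: "g \<in> carrier G" and x: "x \<in> {v \<in> carrier_vec d. A *\<^sub>v v = 0\<^sub>v e}"
  have sc: "\<sigma> g \<in> carrier_mat d d" and tc: "\<tau> g \<in> carrier_mat e e"
    using is_rep_carrier[OF \<sigma> g] is_rep_carrier[OF \<tau> g] .
  have "A *\<^sub>v (\<sigma> g *\<^sub>v x) = \<tau> g *\<^sub>v (A *\<^sub>v x)"
    using x comm[OF g] assoc_mult_mat_vec[OF A sc] assoc_mult_mat_vec[OF tc A] by auto
  thus "\<sigma> g *\<^sub>v x \<in> {v \<in> carrier_vec d. A *\<^sub>v v = 0\<^sub>v e}" using x sc tc by (auto simp: mult_mat_vec_zero)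
qed

lemma intertwiner_image_invariant:
  assumes \<sigma>: "is_rep G d \<sigma>" and \<tau>: "is_rep G e \<tau>" and A: "A \<in> carrier_mat e d"
    and comm: "\<And>g. g \<in> carrier G \<Longrightarrow> \<tau> g * A = A * \<sigma> g"
  shows "invariant_subspace G e \<tau> ((\<lambda>v. A *\<^sub>v v) ` carrier_vec d)"
  unfolding invariant_subspace_def
proof (intro conjI ballI allI)
  show "(\<lambda>v. A *\<^sub>v v) ` carrier_vec d \<subseteq> carrier_vec e" using A by auto
  show "0\<^sub>v e \<in> (\<lambda>v. A *\<^sub>v v) ` carrier_vec d"
    using A by (intro image_eqI[of _ _ "0\<^sub>v d"]) (auto simp: mult_mat_vec_zero)
next
  fix x y assume "x \<in> (\<lambda>v. A *\<^sub>v v) ` carrier_vec d" "y \<in> (\<lambda>v. A *\<^sub>v v) ` carrier_vec d"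
  then obtain a b where "a \<in> carrier_vec d" "b \<in> carrier_vec d" "x = A *\<^sub>v a" "y = A *\<^sub>v b" by auto
  thus "x + y \<in> (\<lambda>v. A *\<^sub>v v) ` carrier_vec d"
    using mult_add_distrib_mat_vec[OF A] by (intro image_eqI[of _ _ "a + b"]) auto
next
  fix c :: complex and x assume "x \<in> (\<lambda>v. A *\<^sub>v v) ` carrier_vec d"
  then obtain a where "a \<in> carrier_vec d" "x = A *\<^sub>v a" by auto
  thus "c \<cdot>\<^sub>v x \<in> (\<lambda>v. A *\<^sub>v v) ` carrier_vec d"
    using mult_mat_vec[OF A] by (intro image_eqI[of _ _ "c \<cdot>\<^sub>v a"]) auto
next
  fix g x assume g: "g \<in> carrier G" and "x \<in> (\<lambda>v. A *\<^sub>v v) ` carrier_vec d"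
  then obtain a where a: "a \<in> carrier_vec d" "x = A *\<^sub>v a" by auto
  have sc: "\<sigma> g \<in> carrier_mat d d" and tc: "\<tau> g \<in> carrier_mat e e"
    using is_rep_carrier[OF \<sigma> g] is_rep_carrier[OF \<tau> g] .
  have "\<tau> g *\<^sub>v x = A *\<^sub>v (\<sigma> g *\<^sub>v a)"
    using a comm[OF g] assoc_mult_mat_vec[OF A sc] assoc_mult_mat_vec[OF tc A] by auto
  thus "\<tau> g *\<^sub>v x \<in> (\<lambda>v. A *\<^sub>v v) ` carrier_vec d" using sc a by auto
qed

lemma schur_lemma_scalar:
  assumes irr: "irreducible_rep G d \<sigma>" and A: "A \<in> carrier_mat d d"
    and comm: "\<And>g. g \<in> carrier G \<Longrightarrow> A * \<sigma> g = \<sigma> g * A"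
  obtains c where "A = c \<cdot>\<^sub>m 1\<^sub>m d"
proof -
  have rep: "is_rep G d \<sigma>" by (rule irreducible_rep_is_rep[OF irr])
  obtain c where "c \<in> spectrum A" using spectrum_non_empty[OF A irreducible_rep_dim_pos[OF irr]] by auto
  then obtain v where v: "v \<in> carrier_vec d" "v \<noteq> 0\<^sub>v d" "A *\<^sub>v v = c \<cdot>\<^sub>v v"
    using A unfolding spectrum_def eigenvalue_def eigenvector_def by auto
  define B where "B = A - c \<cdot>\<^sub>m 1\<^sub>m d"
  have B: "B \<in> carrier_mat d d" unfolding B_def by (rule minus_carrier_mat) simp
  have Bx: "B *\<^sub>v x = A *\<^sub>v x - c \<cdot>\<^sub>v x" if "x \<in> carrier_vec d" for x
    unfolding B_def using A that
    by (simp add: minus_mult_distrib_mat_vec[of _ d d] smult_mat_mult_vec[of "1\<^sub>m d" d d])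
  have "\<sigma> g * B = B * \<sigma> g" if g: "g \<in> carrier G" for g
    unfolding B_def using comm[OF g] A is_rep_carrier[OF rep g]
    by (simp add: mult_minus_distrib_mat minus_mult_distrib_mat
        mult_smult_distrib[of _ d d _ d] mult_smult_assoc_mat[of _ d d _ d])
  hence "invariant_subspace G d \<sigma> {x \<in> carrier_vec d. B *\<^sub>v x = 0\<^sub>v d}"
    by (rule intertwiner_kernel_invariant[OF rep rep B])
  moreover have "v \<in> {x \<in> carrier_vec d. B *\<^sub>v x = 0\<^sub>v d}" using v Bx by simp
  ultimately have kernel: "{x \<in> carrier_vec d. B *\<^sub>v x = 0\<^sub>v d} = carrier_vec d"
    using irr v(2) unfolding irreducible_rep_def by blast
  have "A = c \<cdot>\<^sub>m 1\<^sub>m d"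
  proof (rule mat_eq_by_mult_vec[OF A])
    fix x :: "complex vec" assume x: "x \<in> carrier_vec d"
    hence "x \<in> {x \<in> carrier_vec d. B *\<^sub>v x = 0\<^sub>v d}" using kernel by simp
    hence Ax: "A *\<^sub>v x - c \<cdot>\<^sub>v x = 0\<^sub>v d" using Bx[OF x] by simp
    show "A *\<^sub>v x = (c \<cdot>\<^sub>m 1\<^sub>m d) *\<^sub>v x"
    proof (rule eq_vecI)
      fix i assume "i < dim_vec ((c \<cdot>\<^sub>m 1\<^sub>m d) *\<^sub>v x)"
      hence i: "i < d" by simp
      have "(A *\<^sub>v x - c \<cdot>\<^sub>v x) $ i = 0" using Ax i by simp
      thus "(A *\<^sub>v x) $ i = ((c \<cdot>\<^sub>m 1\<^sub>m d) *\<^sub>v x) $ i"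
        using A x i by (simp add: smult_mat_mult_vec[of _ d d])
    qed (use A in simp)
  qed simp
  thus ?thesis using that by blast
qed

lemma schur_lemma_iso:
  assumes irr\<sigma>: "irreducible_rep G d \<sigma>" and irr\<tau>: "irreducible_rep G e \<tau>"
    and A: "A \<in> carrier_mat e d" and comm: "\<And>g. g \<in> carrier G \<Longrightarrow> \<tau> g * A = A * \<sigma> g"
    and A0: "A \<noteq> 0\<^sub>m e d"
  obtains B where "d = e" "B \<in> carrier_mat d d" "A * B = 1\<^sub>m d" "B * A = 1\<^sub>m d"
proof -
  have \<sigma>: "is_rep G d \<sigma>" and \<tau>: "is_rep G e \<tau>" using irr\<sigma> irr\<tau> by (auto dest: irreducible_rep_is_rep)
  let ?K = "{v \<in> carrier_vec d. A *\<^sub>v v = 0\<^sub>v e}" and ?I = "(\<lambda>v. A *\<^sub>v v) ` carrier_vec d"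
  have "?K \<noteq> carrier_vec d"
  proof
    assume "?K = carrier_vec d"
    hence "A = 0\<^sub>m e d" using A by (intro mat_eq_by_mult_vec[OF A]) auto
    thus False using A0 by simp
  qed
  hence K: "?K = {0\<^sub>v d}"
    using intertwiner_kernel_invariant[OF \<sigma> \<tau> A comm] irr\<sigma> unfolding irreducible_rep_def by blast
  have "?I \<noteq> {0\<^sub>v e}"
  proof
    assume "?I = {0\<^sub>v e}"
    hence "A = 0\<^sub>m e d" using A by (intro mat_eq_by_mult_vec[OF A]) auto
    thus False using A0 by simp
  qed
  hence I: "?I = carrier_vec e"
    using intertwiner_image_invariant[OF \<sigma> \<tau> A comm] irr\<tau> unfolding irreducible_rep_def by blast
  obtain C where C: "C \<in> carrier_mat d e" "C * A = 1\<^sub>m d"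
    using mat_left_inverse_if_injective[OF A] K by blast
  obtain B where B: "B \<in> carrier_mat d e" "A * B = 1\<^sub>m e"
    using mat_right_inverse_if_surjective[OF A] I by (metis image_iff)
  have de: "d = e" using mat_right_inverse_dim_le[OF C(1) A C(2)] mat_right_inverse_dim_le[OF A B] by simp
  have "B * A = 1\<^sub>m d" using mat_mult_left_right_inverse[of A e B] A B de by simp
  thus ?thesis using that B de by auto
qed

end

section \<open>Complete reducibility of unitary representations\<close>

definition fourier_mat :: "'a monoid \<Rightarrow> nat \<Rightarrow> ('a \<Rightarrow> complex mat) \<Rightarrow> ('a \<Rightarrow> complex) \<Rightarrow> complex mat" where
  "fourier_mat G n \<rho> f = mat_sum n n (\<lambda>g. f g \<cdot>\<^sub>m \<rho> g) (carrier G)"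

definition subrep :: "nat \<Rightarrow> complex vec list \<Rightarrow> ('a \<Rightarrow> complex mat) \<Rightarrow> 'a \<Rightarrow> complex mat" where
  "subrep n us \<rho> g = mat_adjoint (mat_of_cols n us) * \<rho> g * mat_of_cols n us"

lemma dim_subrep[simp]:
  "dim_row (subrep n us \<rho> g) = length us" "dim_col (subrep n us \<rho> g) = length us"
  unfolding subrep_def by simp_all

lemma subrep_carrier[simp]: "subrep n us \<rho> g \<in> carrier_mat (length us) (length us)"
  by (simp add: carrier_matI)

lemma dim_fourier_mat[simp]: "dim_row (fourier_mat G n \<rho> f) = n" "dim_col (fourier_mat G n \<rho> f) = n"
  unfolding fourier_mat_def by simp_all

lemma fourier_mat_carrier[simp]: "fourier_mat G n \<rho> f \<in> carrier_mat n n"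
  by (simp add: carrier_matI)

lemma unitary_rep_is_rep: "unitary_rep G n \<rho> \<Longrightarrow> is_rep G n \<rho>"
  unfolding unitary_rep_def by auto

lemma invariant_subspace_vec_subspace: "invariant_subspace G n \<rho> W \<Longrightarrow> vec_subspace n W"
  unfolding invariant_subspace_def vec_subspace_def by auto

lemma rep_mult_basis_eq:
  assumes rep: "is_rep G n \<rho>" and B: "orthonormal_basis n us W"
    and W: "invariant_subspace G n \<rho> W" and g: "g \<in> carrier G"
  shows "\<rho> g * mat_of_cols n us = mat_of_cols n us * subrep n us \<rho> g"
proof (rule mat_col_eqI)
  let ?U = "mat_of_cols n us"
  have U: "?U \<in> carrier_mat n (length us)" and aU: "mat_adjoint ?U \<in> carrier_mat (length us) n" by auto
  have rg: "\<rho> g \<in> carrier_mat n n" by (rule is_rep_carrier[OF rep g])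
  fix j assume "j < dim_col (?U * subrep n us \<rho> g)"
  hence j: "j < length us" by simp
  have uj: "us ! j \<in> W" "us ! j \<in> carrier_vec n"
    using B j nth_mem unfolding orthonormal_basis_def orthonormal_def by blast+
  have "col (\<rho> g * ?U) j = \<rho> g *\<^sub>v us ! j" using col_mult2[OF rg U j] col_mat_of_cols[OF j uj(2)] by simp
  also have "\<dots> = ?U *\<^sub>v (mat_adjoint ?U *\<^sub>v (\<rho> g *\<^sub>v us ! j))"
    using B W g uj unfolding orthonormal_basis_def invariant_subspace_def by simp
  also have "\<dots> = col (?U * subrep n us \<rho> g) j"
    using col_mult2[OF U subrep_carrier[of n us \<rho> g, unfolded subrep_def] j] col_mult2[OF mult_carrier_mat[OF aU rg] U j]
      col_mat_of_cols[OF j uj(2)] assoc_mult_mat_vec[OF aU rg uj(2)]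
    unfolding subrep_def by simp
  finally show "col (\<rho> g * ?U) j = col (?U * subrep n us \<rho> g) j" .
qed (use is_rep_carrier[OF rep g] in \<open>auto simp: subrep_def\<close>)

context plain_group
begin

lemma unitary_subrep:
  assumes rep: "unitary_rep G n \<rho>" and B: "orthonormal_basis n us W"
    and W: "invariant_subspace G n \<rho> W"
  shows "unitary_rep G (length us) (subrep n us \<rho>)"
proof -
  let ?U = "mat_of_cols n us" and ?\<sigma> = "subrep n us \<rho>"
  have U: "?U \<in> carrier_mat n (length us)" and aU: "mat_adjoint ?U \<in> carrier_mat (length us) n" by auto
  have rep': "is_rep G n \<rho>" by (rule unitary_rep_is_rep[OF rep])
  have rc: "\<And>g. g \<in> carrier G \<Longrightarrow> \<rho> g \<in> carrier_mat n n" by (rule is_rep_carrier[OF rep'])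
  have sc: "\<And>g. ?\<sigma> g \<in> carrier_mat (length us) (length us)" by simp
  have UU: "mat_adjoint ?U * ?U = 1\<^sub>m (length us)"
    using B orthonormal_mat_adjoint_mult unfolding orthonormal_basis_def by blast
  have "?\<sigma> (g \<otimes> h) = ?\<sigma> g * ?\<sigma> h" if g: "g \<in> carrier G" and h: "h \<in> carrier G" for g h
  proof -
    have "?\<sigma> (g \<otimes> h) = mat_adjoint ?U * \<rho> g * (\<rho> h * ?U)"
      unfolding subrep_def is_rep_mult[OF rep' g h]
      using assoc_mult_mat[OF aU mult_carrier_mat[OF rc[OF g] rc[OF h]] U] assoc_mult_mat[OF rc[OF g] rc[OF h] U]
        assoc_mult_mat[OF aU rc[OF g] mult_carrier_mat[OF rc[OF h] U]]
      by simp
    also have "\<dots> = mat_adjoint ?U * \<rho> g * (?U * ?\<sigma> h)"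
      using rep_mult_basis_eq[OF rep' B W h] by simp
    also have "\<dots> = ?\<sigma> g * ?\<sigma> h"
      unfolding subrep_def
      using assoc_mult_mat[OF mult_carrier_mat[OF aU rc[OF g]] U subrep_carrier[of n us \<rho> h, unfolded subrep_def]]
      by simp
    finally show ?thesis .
  qed
  moreover have "mat_adjoint (?\<sigma> g) = ?\<sigma> (inv g)" if g: "g \<in> carrier G" for g
  proof -
    have "mat_adjoint (?\<sigma> g) = mat_adjoint ?U * (mat_adjoint (\<rho> g) * ?U)"
      unfolding subrep_def using mat_adjoint_mult[OF mult_carrier_mat[OF aU rc[OF g]] U]
        mat_adjoint_mult[OF aU rc[OF g]] by simp
    also have "\<dots> = ?\<sigma> (inv g)"
      unfolding subrep_def using rep g assoc_mult_mat[OF aU rc[OF inv_closed[OF g]] U]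
      unfolding unitary_rep_def by simp
    finally show ?thesis .
  qed
  ultimately show ?thesis
    using sc is_rep_one[OF rep'] UU aU unfolding unitary_rep_def is_rep_def subrep_def by simp
qed

lemma orthogonal_complement_invariant:
  assumes rep: "unitary_rep G n \<rho>" and W: "invariant_subspace G n \<rho> W"
  shows "invariant_subspace G n \<rho> (orthogonal_complement n W)"
proof -
  have WC: "W \<subseteq> carrier_vec n" using W unfolding invariant_subspace_def by auto
  have "\<rho> g *\<^sub>v v \<in> orthogonal_complement n W" if g: "g \<in> carrier G" and v: "v \<in> orthogonal_complement n W" for g v
  proof -
    have rg: "\<rho> g \<in> carrier_mat n n" by (rule is_rep_carrier[OF unitary_rep_is_rep[OF rep] g])
    have vc: "v \<in> carrier_vec n" using v unfolding orthogonal_complement_def by auto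
    have "(\<rho> g *\<^sub>v v) \<bullet>c w = 0" if w: "w \<in> W" for w
    proof -
      have "(\<rho> g *\<^sub>v v) \<bullet>c w = v \<bullet>c (\<rho> (inv g) *\<^sub>v w)"
        using cscalar_prod_mult_mat_vec[OF rg vc] w WC rep g unfolding unitary_rep_def by auto
      also have "\<dots> = 0" using v W g w unfolding orthogonal_complement_def invariant_subspace_def by auto
      finally show ?thesis .
    qed
    thus ?thesis unfolding orthogonal_complement_def using rg vc by auto
  qed
  thus ?thesis
    using vec_subspace_orthogonal_complement[OF WC]
    unfolding invariant_subspace_def vec_subspace_def by auto
qed

lemma orthonormal_basis_length_less:
  assumes W: "vec_subspace n W" and B: "orthonormal_basis n us W" and ne: "W \<noteq> carrier_vec n"
  shows "length us < n"
  using orthonormal_length_le[of n us] orthonormal_basis_full_length[OF B W] B ne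
  unfolding orthonormal_basis_def by fastforce

lemma fourier_mat_mult_basis:
  assumes rep: "is_rep G n \<rho>" and B: "orthonormal_basis n us W" and W: "invariant_subspace G n \<rho> W"
  shows "fourier_mat G n \<rho> f * mat_of_cols n us = mat_of_cols n us * fourier_mat G (length us) (subrep n us \<rho>) f"
proof -
  let ?U = "mat_of_cols n us"
  have U: "?U \<in> carrier_mat n (length us)" by auto
  have rc: "\<And>g. g \<in> carrier G \<Longrightarrow> \<rho> g \<in> carrier_mat n n" by (rule is_rep_carrier[OF rep])
  have sc: "\<And>g. subrep n us \<rho> g \<in> carrier_mat (length us) (length us)" by simp
  have "fourier_mat G n \<rho> f * ?U = mat_sum n (length us) (\<lambda>g. (f g \<cdot>\<^sub>m \<rho> g) * ?U) (carrier G)"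
    unfolding fourier_mat_def using U rc by (intro mat_sum_mult) auto
  also have "\<dots> = mat_sum n (length us) (\<lambda>g. ?U * (f g \<cdot>\<^sub>m subrep n us \<rho> g)) (carrier G)"
  proof (rule mat_sum_cong)
    fix g assume g: "g \<in> carrier G"
    show "(f g \<cdot>\<^sub>m \<rho> g) * ?U = ?U * (f g \<cdot>\<^sub>m subrep n us \<rho> g)"
      using rep_mult_basis_eq[OF rep B W g] mult_smult_assoc_mat[OF rc[OF g] U]
        mult_smult_distrib[OF U sc] by simp
  qed
  also have "\<dots> = ?U * fourier_mat G (length us) (subrep n us \<rho>) f"
    unfolding fourier_mat_def using U sc by (intro mult_mat_sum[symmetric]) auto
  finally show ?thesis .
qed

text \<open>Induction on the dimension: a reducible unitary representation splits along an invariant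
  subspace and its orthogonal complement, and the Fourier coefficient vanishes on bases of both.\<close>
lemma fourier_mat_eq_0_if_irreducibles_eq_0:
  assumes irr: "\<And>d \<sigma>. irreducible_rep G d \<sigma> \<Longrightarrow> fourier_mat G d \<sigma> f = 0\<^sub>m d d"
  shows "unitary_rep G n \<rho> \<Longrightarrow> fourier_mat G n \<rho> f = 0\<^sub>m n n"
proof (induction n arbitrary: \<rho> rule: less_induct)
  case (less n \<rho>)
  have rep: "is_rep G n \<rho>" by (rule unitary_rep_is_rep[OF less.prems])
  have mult_basis: "fourier_mat G n \<rho> f * mat_of_cols n ws = 0\<^sub>m n (length ws)"
    if B: "orthonormal_basis n ws V" and V: "invariant_subspace G n \<rho> V" and V': "V \<noteq> carrier_vec n" for ws V
  proof -
    have "length ws < n"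
      by (rule orthonormal_basis_length_less[OF invariant_subspace_vec_subspace[OF V] B V'])
    hence "fourier_mat G (length ws) (subrep n ws \<rho>) f = 0\<^sub>m (length ws) (length ws)"
      using less.IH unitary_subrep[OF less.prems B V] by blast
    thus ?thesis using fourier_mat_mult_basis[OF rep B V] by simp
  qed
  consider "n = 0" | "irreducible_rep G n \<rho>"
    | W where "invariant_subspace G n \<rho> W" "W \<noteq> {0\<^sub>v n}" "W \<noteq> carrier_vec n"
    using rep unfolding irreducible_rep_def by blast
  thus ?case
  proof cases
    case 1
    thus ?thesis using fourier_mat_carrier[of G n \<rho> f] by (intro eq_matI) auto
  next
    case 2
    thus ?thesis by (rule irr)
  next
    case 3
    let ?W' = "orthogonal_complement n W"
    have W: "vec_subspace n W" by (rule invariant_subspace_vec_subspace[OF 3(1)])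
    have W'inv: "invariant_subspace G n \<rho> ?W'" by (rule orthogonal_complement_invariant[OF less.prems 3(1)])
    obtain us where us: "orthonormal_basis n us W" using exists_orthonormal_basis[OF W] .
    obtain vs where vs: "orthonormal_basis n vs ?W'"
      using exists_orthonormal_basis[OF invariant_subspace_vec_subspace[OF W'inv]] .
    show ?thesis
      using mat_eq_0_if_mult_complementary_bases_eq_0[OF fourier_mat_carrier[of G n \<rho> f] W us vs]
        mult_basis[OF us 3(1,3)] mult_basis[OF vs W'inv orthogonal_complement_ne_carrier[OF W 3(2)]] by blast
  qed
qed

end

section \<open>Orthogonality of matrix coefficients\<close>

definition matrix_unit :: "nat \<Rightarrow> nat \<Rightarrow> nat \<Rightarrow> nat \<Rightarrow> complex mat" where
  "matrix_unit e d j k = mat e d (\<lambda>(a,b). if a = j \<and> b = k then 1 else 0)"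

lemma matrix_unit_carrier[simp]: "matrix_unit e d j k \<in> carrier_mat e d"
  unfolding matrix_unit_def by simp

lemma mult_matrix_unit_mult_index:
  assumes X: "X \<in> carrier_mat n e" and Y: "Y \<in> carrier_mat d m"
    and jk: "j < e" "k < d" and il: "i < n" "l < m"
  shows "(X * matrix_unit e d j k * Y) $$ (i,l) = X $$ (i,j) * Y $$ (k,l)"
proof -
  have XE: "(X * matrix_unit e d j k) $$ (i,b) = (if b = k then X $$ (i,j) else 0)" if b: "b < d" for b
  proof -
    have "(X * matrix_unit e d j k) $$ (i,b) = (\<Sum>a<e. X $$ (i,a) * (if a = j \<and> b = k then 1 else 0))"
      using X il b unfolding matrix_unit_def by (auto simp: scalar_prod_def atLeast0LessThan intro!: sum.cong)
    also have "\<dots> = (\<Sum>a<e. if a = j then (if b = k then X $$ (i,j) else 0) else 0)"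
      by (intro sum.cong) auto
    also have "\<dots> = (if b = k then X $$ (i,j) else 0)" using jk by (simp add: sum.delta)
    finally show ?thesis .
  qed
  have "(X * matrix_unit e d j k * Y) $$ (i,l) = (\<Sum>b<d. (X * matrix_unit e d j k) $$ (i,b) * Y $$ (b,l))"
    using X Y il by (intro mult_mat_index_sum) auto
  also have "\<dots> = (\<Sum>b<d. if b = k then X $$ (i,j) * Y $$ (k,l) else 0)"
    using XE by (intro sum.cong) auto
  also have "\<dots> = X $$ (i,j) * Y $$ (k,l)" using jk by (simp add: sum.delta)
  finally show ?thesis .
qed

context plain_group
begin

text \<open>Averaging an arbitrary matrix \<open>X\<close> produces an intertwiner from \<open>\<sigma>\<close> to \<open>\<tau>\<close>; taking
  for \<open>X\<close> the matrix units and applying Schur's lemma yields the orthogonality relations.\<close>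
definition rep_average :: "nat \<Rightarrow> nat \<Rightarrow> ('a \<Rightarrow> complex mat) \<Rightarrow> ('a \<Rightarrow> complex mat) \<Rightarrow> complex mat \<Rightarrow> complex mat" where
  "rep_average e d \<tau> \<sigma> X = mat_sum e d (\<lambda>g. \<tau> g * X * \<sigma> (inv g)) (carrier G)"

lemma dim_rep_average[simp]:
  "dim_row (rep_average e d \<tau> \<sigma> X) = e" "dim_col (rep_average e d \<tau> \<sigma> X) = d"
  unfolding rep_average_def by simp_all

lemma rep_average_carrier[simp]: "rep_average e d \<tau> \<sigma> X \<in> carrier_mat e d"
  by (simp add: carrier_matI)

lemma rep_average_intertwines:
  assumes \<sigma>: "is_rep G d \<sigma>" and \<tau>: "is_rep G e \<tau>" and X: "X \<in> carrier_mat e d" and h: "h \<in> carrier G"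
  shows "\<tau> h * rep_average e d \<tau> \<sigma> X = rep_average e d \<tau> \<sigma> X * \<sigma> h"
proof -
  have sc: "\<And>g. g \<in> carrier G \<Longrightarrow> \<sigma> g \<in> carrier_mat d d" by (rule is_rep_carrier[OF \<sigma>])
  have tc: "\<And>g. g \<in> carrier G \<Longrightarrow> \<tau> g \<in> carrier_mat e e" by (rule is_rep_carrier[OF \<tau>])
  have Fc: "\<And>g. g \<in> carrier G \<Longrightarrow> \<tau> g * X * \<sigma> (inv g) \<in> carrier_mat e d"
    using sc tc X by (meson inv_closed mult_carrier_mat)
  define F where "F g = \<tau> g * X * \<sigma> (inv g \<otimes> h)" for g
  have "\<tau> h * rep_average e d \<tau> \<sigma> X = mat_sum e d (\<lambda>g. \<tau> h * (\<tau> g * X * \<sigma> (inv g))) (carrier G)"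
    unfolding rep_average_def using tc[OF h] Fc by (intro mult_mat_sum) auto
  also have "\<dots> = mat_sum e d (\<lambda>g. F (h \<otimes> g)) (carrier G)"
  proof (rule mat_sum_cong)
    fix g assume g: "g \<in> carrier G"
    have "inv (h \<otimes> g) \<otimes> h = inv g" using g h by (simp add: inv_mult_group m_assoc)
    thus "\<tau> h * (\<tau> g * X * \<sigma> (inv g)) = F (h \<otimes> g)"
      unfolding F_def using is_rep_mult[OF \<tau> h g] tc[OF h] tc[OF g] X sc[OF inv_closed[OF g]]
      by (simp add: assoc_mult_mat[of _ e e _ e _ d] assoc_mult_mat[of _ e e _ d _ d])
  qed
  also have "\<dots> = mat_sum e d F (carrier G)" by (rule mat_sum_reindex_bij_betw[OF bij_betw_mult_left[OF h]])
  also have "\<dots> = mat_sum e d (\<lambda>g. \<tau> g * X * \<sigma> (inv g) * \<sigma> h) (carrier G)"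
  proof (rule mat_sum_cong)
    fix g assume g: "g \<in> carrier G"
    show "F g = \<tau> g * X * \<sigma> (inv g) * \<sigma> h"
      unfolding F_def is_rep_mult[OF \<sigma> inv_closed[OF g] h]
      using assoc_mult_mat[symmetric, OF mult_carrier_mat[OF tc[OF g] X] sc[OF inv_closed[OF g]] sc[OF h]] by simp
  qed
  also have "\<dots> = rep_average e d \<tau> \<sigma> X * \<sigma> h"
    unfolding rep_average_def using sc[OF h] Fc by (intro mat_sum_mult[symmetric]) auto
  finally show ?thesis .
qed

lemma rep_average_matrix_unit_index:
  assumes \<sigma>: "is_rep G d \<sigma>" and \<tau>: "is_rep G e \<tau>" and jk: "j < e" "k < d" and il: "i < e" "l < d"
  shows "rep_average e d \<tau> \<sigma> (matrix_unit e d j k) $$ (i,l) = (\<Sum>g\<in>carrier G. \<tau> g $$ (i,j) * \<sigma> (inv g) $$ (k,l))"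
  unfolding rep_average_def using il
  by (auto intro!: sum.cong mult_matrix_unit_mult_index[OF is_rep_carrier[OF \<tau>] is_rep_carrier[OF \<sigma>] jk])

lemma sum_mat_tr_mult_inv_eq_rep_average:
  assumes \<sigma>: "is_rep G d \<sigma>" and \<tau>: "is_rep G e \<tau>"
  shows "(\<Sum>g\<in>carrier G. mat_tr (\<tau> g) * mat_tr (\<sigma> (inv g))) =
     (\<Sum>i<e. \<Sum>k<d. rep_average e d \<tau> \<sigma> (matrix_unit e d i k) $$ (i,k))"
proof -
  have "(\<Sum>g\<in>carrier G. mat_tr (\<tau> g) * mat_tr (\<sigma> (inv g))) =
     (\<Sum>g\<in>carrier G. \<Sum>i<e. \<Sum>k<d. \<tau> g $$ (i,i) * \<sigma> (inv g) $$ (k,k))"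
  proof (rule sum.cong[OF refl])
    fix g assume g: "g \<in> carrier G"
    have "dim_row (\<tau> g) = e" "dim_row (\<sigma> (inv g)) = d"
      using is_rep_carrier[OF \<tau> g] is_rep_carrier[OF \<sigma> inv_closed[OF g]] by auto
    thus "mat_tr (\<tau> g) * mat_tr (\<sigma> (inv g)) = (\<Sum>i<e. \<Sum>k<d. \<tau> g $$ (i,i) * \<sigma> (inv g) $$ (k,k))"
      unfolding mat_tr_def by (simp add: sum_product)
  qed
  also have "\<dots> = (\<Sum>i<e. \<Sum>k<d. \<Sum>g\<in>carrier G. \<tau> g $$ (i,i) * \<sigma> (inv g) $$ (k,k))"
    by (subst sum.swap) (simp add: sum.swap[of _ "carrier G"])
  also have "\<dots> = (\<Sum>i<e. \<Sum>k<d. rep_average e d \<tau> \<sigma> (matrix_unit e d i k) $$ (i,k))"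
    using rep_average_matrix_unit_index[OF \<sigma> \<tau>] by (intro sum.cong) auto
  finally show ?thesis .
qed

lemma sum_mat_tr_mult_inv_same:
  assumes irr: "irreducible_rep G d \<sigma>"
  shows "(\<Sum>g\<in>carrier G. mat_tr (\<sigma> g) * mat_tr (\<sigma> (inv g))) = of_nat (card (carrier G))"
proof -
  have \<sigma>: "is_rep G d \<sigma>" and d: "d > 0" using irr by (auto dest: irreducible_rep_is_rep irreducible_rep_dim_pos)
  have sc: "\<And>g. g \<in> carrier G \<Longrightarrow> \<sigma> g \<in> carrier_mat d d" by (rule is_rep_carrier[OF \<sigma>])
  let ?n = "card (carrier G)"
  have entry: "rep_average d d \<sigma> \<sigma> (matrix_unit d d j k) $$ (j,k) = (if j = k then of_nat ?n / of_nat d else 0)"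
    if jk: "j < d" "k < d" for j k
  proof -
    let ?A = "rep_average d d \<sigma> \<sigma> (matrix_unit d d j k)"
    obtain c where c: "?A = c \<cdot>\<^sub>m 1\<^sub>m d"
      using schur_lemma_scalar[OF irr rep_average_carrier] rep_average_intertwines[OF \<sigma> \<sigma> matrix_unit_carrier]
      by metis
    have "mat_tr ?A = (\<Sum>i<d. \<Sum>g\<in>carrier G. \<sigma> g $$ (i,j) * \<sigma> (inv g) $$ (k,i))"
      unfolding mat_tr_def using rep_average_matrix_unit_index[OF \<sigma> \<sigma> jk] by simp
    also have "\<dots> = (\<Sum>g\<in>carrier G. \<Sum>i<d. \<sigma> (inv g) $$ (k,i) * \<sigma> g $$ (i,j))"
      by (subst sum.swap) (simp add: mult.commute)
    also have "\<dots> = (\<Sum>g\<in>carrier G. (\<sigma> (inv g) * \<sigma> g) $$ (k,j))"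
    proof (rule sum.cong[OF refl])
      fix g assume g: "g \<in> carrier G"
      show "(\<Sum>i<d. \<sigma> (inv g) $$ (k,i) * \<sigma> g $$ (i,j)) = (\<sigma> (inv g) * \<sigma> g) $$ (k,j)"
        by (rule mult_mat_index_sum[symmetric, OF sc[OF inv_closed[OF g]] sc[OF g] jk(2,1)])
    qed
    also have "\<dots> = (if j = k then of_nat ?n else 0)"
      using is_rep_inv_left[OF \<sigma>] jk by simp
    finally have "c * of_nat d = (if j = k then of_nat ?n else 0)"
      unfolding c by (simp add: mat_tr_smult[of _ d])
    hence "c = (if j = k then of_nat ?n / of_nat d else 0)"
      using d by (auto simp: field_simps split: if_splits)
    thus ?thesis unfolding c using jk by auto
  qed
  have "(\<Sum>g\<in>carrier G. mat_tr (\<sigma> g) * mat_tr (\<sigma> (inv g))) =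
      (\<Sum>i<d. \<Sum>k<d. rep_average d d \<sigma> \<sigma> (matrix_unit d d i k) $$ (i,k))"
    by (rule sum_mat_tr_mult_inv_eq_rep_average[OF \<sigma> \<sigma>])
  also have "\<dots> = of_nat ?n" using entry d by (simp add: sum.delta)
  finally show ?thesis .
qed

lemma sum_mat_tr_mult_inv_distinct:
  assumes irr\<sigma>: "irreducible_rep G d \<sigma>" and irr\<tau>: "irreducible_rep G e \<tau>"
    and ne: "\<exists>g\<in>carrier G. mat_tr (\<tau> g) \<noteq> mat_tr (\<sigma> g)"
  shows "(\<Sum>g\<in>carrier G. mat_tr (\<tau> g) * mat_tr (\<sigma> (inv g))) = 0"
proof -
  have \<sigma>: "is_rep G d \<sigma>" and \<tau>: "is_rep G e \<tau>" using irr\<sigma> irr\<tau> by (auto dest: irreducible_rep_is_rep)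
  have sc: "\<And>g. g \<in> carrier G \<Longrightarrow> \<sigma> g \<in> carrier_mat d d" by (rule is_rep_carrier[OF \<sigma>])
  have tc: "\<And>g. g \<in> carrier G \<Longrightarrow> \<tau> g \<in> carrier_mat e e" by (rule is_rep_carrier[OF \<tau>])
  have zero: "rep_average e d \<tau> \<sigma> X = 0\<^sub>m e d" if X: "X \<in> carrier_mat e d" for X
  proof (rule ccontr)
    let ?A = "rep_average e d \<tau> \<sigma> X"
    assume "?A \<noteq> 0\<^sub>m e d"
    then obtain B where de: "d = e" and B: "B \<in> carrier_mat d d" "?A * B = 1\<^sub>m d" "B * ?A = 1\<^sub>m d"
      using schur_lemma_iso[OF irr\<sigma> irr\<tau> rep_average_carrier rep_average_intertwines[OF \<sigma> \<tau> X]] by metis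
    have A: "?A \<in> carrier_mat d d" using de by simp
    have "mat_tr (\<tau> g) = mat_tr (\<sigma> g)" if g: "g \<in> carrier G" for g
    proof -
      have tg: "\<tau> g \<in> carrier_mat d d" using tc[OF g] de by simp
      have "\<tau> g = \<tau> g * (?A * B)" using B(2) tg by simp
      also have "\<dots> = (\<tau> g * ?A) * B" using tg A B by (simp add: assoc_mult_mat[of _ d d _ d _ d])
      also have "\<dots> = ?A * (\<sigma> g * B)"
        using rep_average_intertwines[OF \<sigma> \<tau> X g] A sc[OF g] B by (simp add: assoc_mult_mat[of _ d d _ d _ d])
      finally have "mat_tr (\<tau> g) = mat_tr ((\<sigma> g * B) * ?A)" using A sc[OF g] B by (simp add: mat_tr_mult_comm[of _ d d])
      also have "(\<sigma> g * B) * ?A = \<sigma> g" using A sc[OF g] B by (simp add: assoc_mult_mat[of _ d d _ d _ d])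
      finally show ?thesis .
    qed
    thus False using ne by auto
  qed
  show ?thesis
    unfolding sum_mat_tr_mult_inv_eq_rep_average[OF \<sigma> \<tau>] using zero by simp
qed

end

section \<open>Irreducible characters\<close>

definition class_function :: "'a monoid \<Rightarrow> ('a \<Rightarrow> 'b) \<Rightarrow> bool" where
  "class_function G f \<longleftrightarrow> (\<forall>x\<in>carrier G. \<forall>g\<in>carrier G. f (x \<otimes>\<^bsub>G\<^esub> g \<otimes>\<^bsub>G\<^esub> inv\<^bsub>G\<^esub> x) = f g)"

lemma character_of_apply: "g \<in> carrier G \<Longrightarrow> character_of G \<sigma> g = mat_tr (\<sigma> g)"
  unfolding character_of_def by simp

lemma IrrE:
  assumes "\<chi> \<in> Irr G"
  obtains d \<sigma> where "irreducible_rep G d \<sigma>" "\<chi> = character_of G \<sigma>"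
  using assms unfolding Irr_def by auto

lemma Irr_outside_carrier: "\<chi> \<in> Irr G \<Longrightarrow> g \<notin> carrier G \<Longrightarrow> \<chi> g = 0"
  by (auto elim!: IrrE simp: character_of_def)

context plain_group
begin

lemma class_function_Irr: "\<chi> \<in> Irr G \<Longrightarrow> class_function G \<chi>"
  unfolding class_function_def
  by (auto elim!: IrrE dest!: irreducible_rep_is_rep simp: character_of_apply mat_tr_rep_conjugate)

lemma fourier_mat_class_function_conjugate:
  assumes \<sigma>: "is_rep G d \<sigma>" and f: "class_function G f" and x: "x \<in> carrier G"
  shows "\<sigma> x * fourier_mat G d \<sigma> f * \<sigma> (inv x) = fourier_mat G d \<sigma> f"
proof -
  have sc: "\<And>g. g \<in> carrier G \<Longrightarrow> \<sigma> g \<in> carrier_mat d d" by (rule is_rep_carrier[OF \<sigma>])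
  have xi: "inv x \<in> carrier G" using x by simp
  have "\<sigma> x * fourier_mat G d \<sigma> f = mat_sum d d (\<lambda>g. \<sigma> x * (f g \<cdot>\<^sub>m \<sigma> g)) (carrier G)"
    unfolding fourier_mat_def using sc x by (intro mult_mat_sum) auto
  also have "\<dots> * \<sigma> (inv x) = mat_sum d d (\<lambda>g. \<sigma> x * (f g \<cdot>\<^sub>m \<sigma> g) * \<sigma> (inv x)) (carrier G)"
    using sc x xi by (intro mat_sum_mult) (auto intro!: mult_carrier_mat[of _ d d _ d])
  also have "\<dots> = mat_sum d d (\<lambda>g. (\<lambda>g. f g \<cdot>\<^sub>m \<sigma> g) (x \<otimes> g \<otimes> inv x)) (carrier G)"
  proof (rule mat_sum_cong)
    fix g assume g: "g \<in> carrier G"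
    have "\<sigma> x * (f g \<cdot>\<^sub>m \<sigma> g) * \<sigma> (inv x) = f g \<cdot>\<^sub>m (\<sigma> x * \<sigma> g * \<sigma> (inv x))"
      using sc[OF x] sc[OF g] sc[OF xi]
      by (simp add: mult_smult_distrib[of _ d d _ d] mult_smult_assoc_mat[of _ d d _ d])
    also have "\<dots> = f (x \<otimes> g \<otimes> inv x) \<cdot>\<^sub>m \<sigma> (x \<otimes> g \<otimes> inv x)"
      using is_rep_mult[OF \<sigma>] x g xi f unfolding class_function_def by simp
    finally show "\<sigma> x * (f g \<cdot>\<^sub>m \<sigma> g) * \<sigma> (inv x) = (\<lambda>g. f g \<cdot>\<^sub>m \<sigma> g) (x \<otimes> g \<otimes> inv x)" .
  qed
  also have "\<dots> = fourier_mat G d \<sigma> f"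
    unfolding fourier_mat_def by (rule mat_sum_reindex_bij_betw[OF bij_betw_conjugation[OF x]])
  finally show ?thesis .
qed

lemma fourier_mat_class_function_eq_0:
  assumes irr: "irreducible_rep G d \<sigma>" and f: "class_function G f"
    and orth: "(\<Sum>g\<in>carrier G. f g * mat_tr (\<sigma> g)) = 0"
  shows "fourier_mat G d \<sigma> f = 0\<^sub>m d d"
proof -
  let ?M = "fourier_mat G d \<sigma> f"
  have \<sigma>: "is_rep G d \<sigma>" and d: "d > 0" using irr by (auto dest: irreducible_rep_is_rep irreducible_rep_dim_pos)
  have sc: "\<And>g. g \<in> carrier G \<Longrightarrow> \<sigma> g \<in> carrier_mat d d" by (rule is_rep_carrier[OF \<sigma>])
  have "?M * \<sigma> x = \<sigma> x * ?M" if x: "x \<in> carrier G" for x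
  proof -
    have "?M * \<sigma> x = \<sigma> x * ?M * \<sigma> (inv x) * \<sigma> x"
      using fourier_mat_class_function_conjugate[OF \<sigma> f x] by simp
    also have "\<dots> = \<sigma> x * ?M * (\<sigma> (inv x) * \<sigma> x)"
      using sc[OF x] sc[OF inv_closed[OF x]] by (intro assoc_mult_mat) auto
    also have "\<dots> = \<sigma> x * ?M" using is_rep_inv_left[OF \<sigma> x] sc[OF x] by simp
    finally show ?thesis .
  qed
  then obtain c where c: "?M = c \<cdot>\<^sub>m 1\<^sub>m d" using schur_lemma_scalar[OF irr fourier_mat_carrier] by metis
  have "c * of_nat d = mat_tr ?M" unfolding c by (simp add: mat_tr_smult[of _ d])
  also have "\<dots> = (\<Sum>g\<in>carrier G. f g * mat_tr (\<sigma> g))"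
    unfolding fourier_mat_def using sc by (subst mat_tr_mat_sum) (auto simp: mat_tr_smult[of _ d])
  finally have "c = 0" using orth d by simp
  thus ?thesis unfolding c by auto
qed

text \<open>Rows and columns are indexed by the positions in an enumeration \<open>els\<close> of the group.\<close>
definition regular_rep :: "'a list \<Rightarrow> 'a \<Rightarrow> complex mat" where
  "regular_rep els g = mat (length els) (length els) (\<lambda>(i,j). if els ! i = g \<otimes> els ! j then 1 else 0)"

lemma regular_rep_mult:
  assumes els: "set els = carrier G" "distinct els" and g: "g \<in> carrier G" and h: "h \<in> carrier G"
  shows "regular_rep els (g \<otimes> h) = regular_rep els g * regular_rep els h"
proof (rule eq_matI)
  let ?n = "length els"
  have ec: "\<And>i. i < ?n \<Longrightarrow> els ! i \<in> carrier G" using els nth_mem by blast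
  fix i j assume "i < dim_row (regular_rep els g * regular_rep els h)" "j < dim_col (regular_rep els g * regular_rep els h)"
  hence ij: "i < ?n" "j < ?n" unfolding regular_rep_def by auto
  obtain k0 where k0: "k0 < ?n" "els ! k0 = h \<otimes> els ! j"
    using els(1) h ec[OF ij(2)] by (metis in_set_conv_nth m_closed)
  have "(regular_rep els g * regular_rep els h) $$ (i,j) =
      (\<Sum>k<?n. (if els ! i = g \<otimes> els ! k then 1 else 0) * (if els ! k = h \<otimes> els ! j then 1 else 0))"
    using ij unfolding regular_rep_def by (subst mult_mat_index_sum[of _ ?n ?n]) auto
  also have "\<dots> = (\<Sum>k<?n. if k = k0 then (if els ! i = g \<otimes> els ! k0 then 1 else 0) else 0)"
  proof (rule sum.cong[OF refl])
    fix k assume "k \<in> {..<?n}"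
    hence "els ! k = h \<otimes> els ! j \<longleftrightarrow> k = k0"
      using nth_eq_iff_index_eq[OF els(2), of k k0] k0 by auto
    thus "(if els ! i = g \<otimes> els ! k then 1 else 0) * (if els ! k = h \<otimes> els ! j then 1 else 0)
        = (if k = k0 then (if els ! i = g \<otimes> els ! k0 then 1 else 0) else (0::complex))" by auto
  qed
  also have "\<dots> = regular_rep els (g \<otimes> h) $$ (i,j)"
    using k0 g h ec[OF ij(2)] ij unfolding regular_rep_def by (simp add: m_assoc)
  finally show "regular_rep els (g \<otimes> h) $$ (i,j) = (regular_rep els g * regular_rep els h) $$ (i,j)" ..
qed (auto simp: regular_rep_def)

lemma unitary_regular_rep:
  assumes els: "set els = carrier G" "distinct els"
  shows "unitary_rep G (length els) (regular_rep els)"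
proof -
  let ?n = "length els"
  have ec: "\<And>i. i < ?n \<Longrightarrow> els ! i \<in> carrier G" using els nth_mem by blast
  have "regular_rep els \<one> = 1\<^sub>m ?n"
    unfolding regular_rep_def using ec els(2) by (intro eq_matI) (auto simp: nth_eq_iff_index_eq)
  moreover have "mat_adjoint (regular_rep els g) = regular_rep els (inv g)" if g: "g \<in> carrier G" for g
    unfolding regular_rep_def using ec g by (intro eq_matI) (auto simp: inv_solve_left)
  ultimately show ?thesis
    unfolding unitary_rep_def is_rep_def using regular_rep_mult[OF els]
    by (auto simp: regular_rep_def)
qed

lemma fourier_mat_regular_rep_index:
  assumes els: "set els = carrier G" "distinct els" and fin: "finite (carrier G)"
    and i: "i < length els" and j: "j < length els" and j1: "els ! j = \<one>"
  shows "fourier_mat G (length els) (regular_rep els) f $$ (i,j) = f (els ! i)"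
proof -
  have ei: "els ! i \<in> carrier G" using els i nth_mem by blast
  have "fourier_mat G (length els) (regular_rep els) f $$ (i,j) = (\<Sum>g\<in>carrier G. if g = els ! i then f g else 0)"
    using i j j1 ei unfolding fourier_mat_def regular_rep_def by (auto intro!: sum.cong)
  also have "\<dots> = f (els ! i)" using fin ei by (simp add: sum.delta')
  finally show ?thesis .
qed

end

definition char_vec :: "'a list \<Rightarrow> ('a \<Rightarrow> complex) \<Rightarrow> complex vec" where
  "char_vec els \<chi> = vec (length els) (\<lambda>i. complex_of_real (1 / sqrt (length els)) * \<chi> (els ! i))"

locale finite_group = plain_group +
  assumes finite_carrier: "finite (carrier G)"
begin

lemma card_carrier_pos: "card (carrier G) > 0"
  using finite_carrier one_closed card_gt_0_iff by blast

lemma Irr_inv: "\<chi> \<in> Irr G \<Longrightarrow> g \<in> carrier G \<Longrightarrow> \<chi> (inv g) = cnj (\<chi> g)"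
  by (auto elim!: IrrE dest!: irreducible_rep_is_rep simp: character_of_apply mat_tr_rep_inv[OF finite_carrier])

lemma Irr_row_orthogonality:
  assumes \<chi>1: "\<chi>1 \<in> Irr G" and \<chi>2: "\<chi>2 \<in> Irr G"
  shows "(\<Sum>g\<in>carrier G. \<chi>1 g * cnj (\<chi>2 g)) = (if \<chi>1 = \<chi>2 then of_nat (card (carrier G)) else 0)"
proof -
  obtain d \<sigma> where irr\<sigma>: "irreducible_rep G d \<sigma>" and ch1: "\<chi>1 = character_of G \<sigma>" using IrrE[OF \<chi>1] .
  obtain e \<tau> where irr\<tau>: "irreducible_rep G e \<tau>" and ch2: "\<chi>2 = character_of G \<tau>" using IrrE[OF \<chi>2] .
  have eq: "(\<Sum>g\<in>carrier G. \<chi>1 g * cnj (\<chi>2 g)) = (\<Sum>g\<in>carrier G. mat_tr (\<sigma> g) * mat_tr (\<tau> (inv g)))"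
    using Irr_inv[OF \<chi>2] by (intro sum.cong) (auto simp: ch1 ch2 character_of_apply)
  show ?thesis
  proof (cases "\<chi>1 = \<chi>2")
    case True
    have "mat_tr (\<tau> (inv g)) = mat_tr (\<sigma> (inv g))" if "g \<in> carrier G" for g
    proof -
      have "character_of G \<tau> (inv g) = character_of G \<sigma> (inv g)" using True by (simp add: ch1 ch2)
      thus ?thesis using that by (simp add: character_of_apply)
    qed
    hence "(\<Sum>g\<in>carrier G. mat_tr (\<sigma> g) * mat_tr (\<tau> (inv g))) = (\<Sum>g\<in>carrier G. mat_tr (\<sigma> g) * mat_tr (\<sigma> (inv g)))"
      by (intro sum.cong) auto
    thus ?thesis using eq True sum_mat_tr_mult_inv_same[OF irr\<sigma>] by simp
  next
    case False
    have "\<exists>g\<in>carrier G. mat_tr (\<sigma> g) \<noteq> mat_tr (\<tau> g)"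
      using False unfolding ch1 ch2 character_of_def by auto
    thus ?thesis using eq False sum_mat_tr_mult_inv_distinct[OF irr\<tau> irr\<sigma>] by simp
  qed
qed

text \<open>Completeness of the irreducible characters: a class function orthogonal to all of them
  has vanishing Fourier coefficients at every irreducible representation, hence at the regular
  representation, whose coefficients are the values of the function.\<close>
lemma class_function_eq_0_if_orthogonal_Irr:
  assumes f: "class_function G f"
    and orth: "\<And>\<chi>. \<chi> \<in> Irr G \<Longrightarrow> (\<Sum>g\<in>carrier G. f g * cnj (\<chi> g)) = 0"
    and g: "g \<in> carrier G"
  shows "f g = 0"
proof -
  define h where "h g = f (inv g)" for g
  have h: "class_function G h"
    using f unfolding class_function_def h_def by (simp add: inv_mult_group m_assoc)
  have "fourier_mat G d \<sigma> h = 0\<^sub>m d d" if irr: "irreducible_rep G d \<sigma>" for d \<sigma>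
  proof (rule fourier_mat_class_function_eq_0[OF irr h])
    have "(\<Sum>g\<in>carrier G. h g * mat_tr (\<sigma> g)) = (\<Sum>g\<in>carrier G. f g * mat_tr (\<sigma> (inv g)))"
      unfolding h_def using sum.reindex_bij_betw[OF bij_betw_inv, of "\<lambda>g. f (inv g) * mat_tr (\<sigma> g)"] by simp
    also have "\<dots> = (\<Sum>g\<in>carrier G. f g * cnj (character_of G \<sigma> g))"
      using mat_tr_rep_inv[OF finite_carrier irreducible_rep_is_rep[OF irr]]
      by (intro sum.cong) (auto simp: character_of_apply)
    also have "\<dots> = 0" using orth irr unfolding Irr_def by blast
    finally show "(\<Sum>g\<in>carrier G. h g * mat_tr (\<sigma> g)) = 0" .
  qed
  moreover obtain els where els: "set els = carrier G" "distinct els"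
    using finite_distinct_list[OF finite_carrier] by auto
  ultimately have "fourier_mat G (length els) (regular_rep els) h = 0\<^sub>m (length els) (length els)"
    using fourier_mat_eq_0_if_irreducibles_eq_0 unitary_regular_rep by blast
  moreover obtain j where j: "j < length els" "els ! j = \<one>" using els by (metis in_set_conv_nth one_closed)
  moreover obtain i where i: "i < length els" "els ! i = inv g" using els g by (metis in_set_conv_nth inv_closed)
  ultimately show ?thesis
    using fourier_mat_regular_rep_index[OF els finite_carrier i(1) j, of h] g unfolding h_def by simp
qed

lemma cscalar_prod_char_vec:
  assumes els: "set els = carrier G" "distinct els" and \<chi>1: "\<chi>1 \<in> Irr G" and \<chi>2: "\<chi>2 \<in> Irr G"
  shows "char_vec els \<chi>1 \<bullet>c char_vec els \<chi>2 = (if \<chi>1 = \<chi>2 then 1 else 0)"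
proof -
  let ?n = "length els" and ?c = "complex_of_real (1 / sqrt (length els))"
  have len: "?n = card (carrier G)" using els distinct_card by fastforce
  have cc: "?c * cnj ?c = 1 / of_nat ?n"
  proof -
    have "?c * cnj ?c = complex_of_real ((1 / sqrt ?n) * (1 / sqrt ?n))"
      by (simp only: complex_cnj_complex_of_real of_real_mult)
    also have "(1 / sqrt ?n) * (1 / sqrt ?n) = 1 / ?n" by (simp flip: real_sqrt_mult)
    finally show ?thesis by simp
  qed
  have "char_vec els \<chi>1 \<bullet>c char_vec els \<chi>2 = (\<Sum>i<?n. (?c * cnj ?c) * (\<chi>1 (els ! i) * cnj (\<chi>2 (els ! i))))"
    unfolding char_vec_def by (subst cscalar_prod_eq_sum[of _ ?n]) (auto simp: mult_ac intro!: sum.cong)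
  also have "\<dots> = (?c * cnj ?c) * (\<Sum>g\<in>carrier G. \<chi>1 g * cnj (\<chi>2 g))"
    using sum.reindex_bij_betw[OF bij_betw_nth[OF els(2) refl els(1)[symmetric]]]
    by (simp add: sum_distrib_left atLeast0LessThan)
  also have "\<dots> = 1 / of_nat ?n * (if \<chi>1 = \<chi>2 then of_nat (card (carrier G)) else 0)"
    unfolding cc Irr_row_orthogonality[OF \<chi>1 \<chi>2] ..
  also have "\<dots> = (if \<chi>1 = \<chi>2 then 1 else 0)" using len card_carrier_pos by simp
  finally show ?thesis .
qed

lemma card_Irr_le:
  assumes S: "S \<subseteq> Irr G" "finite S"
  shows "card S \<le> card (carrier G)"
proof -
  obtain els where els: "set els = carrier G" "distinct els"
    using finite_distinct_list[OF finite_carrier] by auto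
  obtain chis where chis: "set chis = S" "distinct chis" using finite_distinct_list[OF S(2)] by auto
  have len: "length els = card (carrier G)" using els distinct_card by fastforce
  have "orthonormal (length els) (map (char_vec els) chis)"
    unfolding orthonormal_def
  proof (intro conjI allI impI)
    show "set (map (char_vec els) chis) \<subseteq> carrier_vec (length els)" unfolding char_vec_def by auto
    fix i j assume "i < length (map (char_vec els) chis)" "j < length (map (char_vec els) chis)"
    hence ij: "i < length chis" "j < length chis" by auto
    have "chis ! i \<in> Irr G" "chis ! j \<in> Irr G" using ij chis S(1) nth_mem by blast+
    moreover have "chis ! i = chis ! j \<longleftrightarrow> i = j" using chis(2) ij nth_eq_iff_index_eq by blast
    ultimately show "map (char_vec els) chis ! i \<bullet>c map (char_vec els) chis ! j = (if i = j then 1 else 0)"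
      using ij cscalar_prod_char_vec[OF els] by auto
  qed
  hence "length chis \<le> card (carrier G)" using orthonormal_length_le len by fastforce
  thus ?thesis using chis distinct_card by fastforce
qed

lemma finite_Irr: "finite (Irr G)"
proof (rule ccontr)
  assume "infinite (Irr G)"
  then obtain S where S: "finite S" "card S = Suc (card (carrier G))" "S \<subseteq> Irr G"
    using infinite_arbitrarily_large by blast
  have "card S \<le> card (carrier G)" by (rule card_Irr_le[OF S(3,1)])
  thus False using S(2) by simp
qed

text \<open>Subtracting from a class function its expansion in irreducible characters leaves a class
  function orthogonal to all of them, which vanishes by completeness.\<close>
lemma class_function_Irr_expansion:
  assumes f: "class_function G f" and g: "g \<in> carrier G"
  shows "f g = (\<Sum>\<chi>\<in>Irr G. (\<Sum>y\<in>carrier G. f y * cnj (\<chi> y)) / of_nat (card (carrier G)) * \<chi> g)"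
proof -
  define a where "a \<chi> = (\<Sum>y\<in>carrier G. f y * cnj (\<chi> y)) / of_nat (card (carrier G))" for \<chi>
  define F where "F x = f x - (\<Sum>\<chi>\<in>Irr G. a \<chi> * \<chi> x)" for x
  have "class_function G F"
    unfolding class_function_def
  proof (intro ballI)
    fix x y assume x: "x \<in> carrier G" and y: "y \<in> carrier G"
    have "(\<Sum>\<chi>\<in>Irr G. a \<chi> * \<chi> (x \<otimes> y \<otimes> inv x)) = (\<Sum>\<chi>\<in>Irr G. a \<chi> * \<chi> y)"
      using class_function_Irr x y unfolding class_function_def by (intro sum.cong) auto
    thus "F (x \<otimes> y \<otimes> inv x) = F y" unfolding F_def using f x y unfolding class_function_def by simp
  qed
  moreover have "(\<Sum>y\<in>carrier G. F y * cnj (\<chi>' y)) = 0" if \<chi>': "\<chi>' \<in> Irr G" for \<chi>'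
  proof -
    have "(\<Sum>y\<in>carrier G. F y * cnj (\<chi>' y)) =
        (\<Sum>y\<in>carrier G. f y * cnj (\<chi>' y)) - (\<Sum>\<chi>\<in>Irr G. a \<chi> * (\<Sum>y\<in>carrier G. \<chi> y * cnj (\<chi>' y)))"
      unfolding F_def
      by (simp add: left_diff_distrib sum_subtractf sum_distrib_left sum_distrib_right
          sum.swap[of _ "carrier G"] mult.assoc)
    also have "(\<Sum>\<chi>\<in>Irr G. a \<chi> * (\<Sum>y\<in>carrier G. \<chi> y * cnj (\<chi>' y)))
        = (\<Sum>\<chi>\<in>Irr G. if \<chi> = \<chi>' then a \<chi> * of_nat (card (carrier G)) else 0)"
      using Irr_row_orthogonality[OF _ \<chi>'] by (intro sum.cong) auto
    also have "\<dots> = a \<chi>' * of_nat (card (carrier G))" using \<chi>' finite_Irr by (simp add: sum.delta')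
    finally show ?thesis unfolding a_def using card_carrier_pos by simp
  qed
  ultimately have "F g = 0" using class_function_eq_0_if_orthogonal_Irr g by blast
  thus ?thesis unfolding F_def a_def by simp
qed

end

section \<open>Conjugacy classes and the second orthogonality relation\<close>

context plain_group
begin

lemma conj_class_iff: "y \<in> conj_class G h \<longleftrightarrow> (\<exists>k\<in>carrier G. y = k \<otimes> h \<otimes> inv k)"
  unfolding conj_class_def by auto

lemma conj_class_subset_carrier: "h \<in> carrier G \<Longrightarrow> conj_class G h \<subseteq> carrier G"
  unfolding conj_class_def by auto

lemma conj_class_self: "h \<in> carrier G \<Longrightarrow> h \<in> conj_class G h"
  unfolding conj_class_iff by (intro bexI[of _ \<one>]) auto

lemma conj_class_conjugate_iff:
  assumes x: "x \<in> carrier G" and y: "y \<in> carrier G" and h: "h \<in> carrier G"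
  shows "x \<otimes> y \<otimes> inv x \<in> conj_class G h \<longleftrightarrow> y \<in> conj_class G h"
proof
  assume "y \<in> conj_class G h"
  then obtain k where k: "k \<in> carrier G" "y = k \<otimes> h \<otimes> inv k" unfolding conj_class_iff by auto
  have "x \<otimes> y \<otimes> inv x = (x \<otimes> k) \<otimes> h \<otimes> inv (x \<otimes> k)"
    using x k h by (simp add: m_assoc inv_mult_group)
  thus "x \<otimes> y \<otimes> inv x \<in> conj_class G h" unfolding conj_class_iff using x k by blast
next
  assume "x \<otimes> y \<otimes> inv x \<in> conj_class G h"
  then obtain k where k: "k \<in> carrier G" "x \<otimes> y \<otimes> inv x = k \<otimes> h \<otimes> inv k" unfolding conj_class_iff by auto
  have "y = inv x \<otimes> (x \<otimes> y \<otimes> inv x) \<otimes> x" using x y by (simp add: m_assoc inv_mult_cancel_left)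
  also have "\<dots> = (inv x \<otimes> k) \<otimes> h \<otimes> inv (inv x \<otimes> k)"
    unfolding k(2) using x k h by (simp add: m_assoc inv_mult_group)
  finally show "y \<in> conj_class G h" unfolding conj_class_iff using x k by blast
qed

lemma conj_class_eq:
  assumes h: "h \<in> carrier G" and h': "h' \<in> conj_class G h"
  shows "conj_class G h' = conj_class G h"
proof -
  obtain k where k: "k \<in> carrier G" "h' = k \<otimes> h \<otimes> inv k" using h' unfolding conj_class_iff by auto
  show ?thesis
  proof (intro equalityI subsetI)
    fix y assume "y \<in> conj_class G h'"
    then obtain l where l: "l \<in> carrier G" "y = l \<otimes> h' \<otimes> inv l" unfolding conj_class_iff by auto
    have "y = (l \<otimes> k) \<otimes> h \<otimes> inv (l \<otimes> k)"
      unfolding l(2) k(2) using l k h by (simp add: m_assoc inv_mult_group)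
    thus "y \<in> conj_class G h" unfolding conj_class_iff using l k by blast
  next
    fix y assume "y \<in> conj_class G h"
    then obtain l where l: "l \<in> carrier G" "y = l \<otimes> h \<otimes> inv l" unfolding conj_class_iff by auto
    have "(l \<otimes> inv k) \<otimes> h' \<otimes> inv (l \<otimes> inv k) = l \<otimes> h \<otimes> inv l"
      unfolding k(2) using l k h by (simp add: m_assoc inv_mult_group inv_mult_cancel_left mult_inv_cancel_left)
    hence "y = (l \<otimes> inv k) \<otimes> h' \<otimes> inv (l \<otimes> inv k)" unfolding l(2) by simp
    thus "y \<in> conj_class G h'" unfolding conj_class_iff using l k by blast
  qed
qed

lemma conj_class_sym: "g \<in> carrier G \<Longrightarrow> h \<in> carrier G \<Longrightarrow> g \<in> conj_class G h \<longleftrightarrow> h \<in> conj_class G g"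
  using conj_class_eq conj_class_self by blast

lemma Irr_conj_class: "\<chi> \<in> Irr G \<Longrightarrow> h \<in> carrier G \<Longrightarrow> y \<in> conj_class G h \<Longrightarrow> \<chi> y = \<chi> h"
  using class_function_Irr unfolding conj_class_iff class_function_def by auto

lemma cval_conj_class: "\<chi> \<in> Irr G \<Longrightarrow> h \<in> carrier G \<Longrightarrow> cval \<chi> (conj_class G h) = \<chi> h"
  unfolding cval_def using someI[of "\<lambda>g. g \<in> conj_class G h", OF conj_class_self] Irr_conj_class by blast

lemma sum_carrier_conj_class:
  fixes H :: "'a set \<Rightarrow> 'b :: comm_semiring_1"
  assumes fin: "finite (carrier G)"
  shows "(\<Sum>g\<in>carrier G. H (conj_class G g)) = (\<Sum>C\<in>Conj G. of_nat (card C) * H C)"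
proof -
  have "(\<Sum>g\<in>carrier G. H (conj_class G g)) =
      (\<Sum>C\<in>Conj G. \<Sum>x\<in>{x \<in> carrier G. conj_class G x = C}. H (conj_class G x))"
    unfolding Conj_def by (rule sum.image_gen[OF fin])
  also have "\<dots> = (\<Sum>C\<in>Conj G. of_nat (card C) * H C)"
  proof (rule sum.cong[OF refl])
    fix C assume "C \<in> Conj G"
    then obtain h where h: "h \<in> carrier G" "C = conj_class G h" unfolding Conj_def by auto
    have "{x \<in> carrier G. conj_class G x = C} = C"
      using h conj_class_self conj_class_eq conj_class_subset_carrier by blast
    moreover have "(\<Sum>x\<in>{x \<in> carrier G. conj_class G x = C}. H (conj_class G x))
        = (\<Sum>x\<in>{x \<in> carrier G. conj_class G x = C}. H C)"
      by (rule sum.cong) auto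
    ultimately show "(\<Sum>x\<in>{x \<in> carrier G. conj_class G x = C}. H (conj_class G x)) = of_nat (card C) * H C"
      by simp
  qed
  finally show ?thesis .
qed

end

context finite_group
begin

lemma finite_conj_class: "h \<in> carrier G \<Longrightarrow> finite (conj_class G h)"
  using conj_class_subset_carrier finite_carrier finite_subset by blast

lemma card_conj_class_pos: "h \<in> carrier G \<Longrightarrow> card (conj_class G h) > 0"
  using finite_conj_class conj_class_self card_gt_0_iff by blast

lemma Irr_column_orthogonality:
  assumes g: "g \<in> carrier G" and h: "h \<in> carrier G"
  shows "(\<Sum>\<chi>\<in>Irr G. \<chi> g * cnj (\<chi> h)) =
    (if g \<in> conj_class G h then of_nat (card (carrier G)) / of_nat (card (conj_class G h)) else 0)"
proof -
  let ?n = "card (carrier G)" and ?C = "conj_class G h"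
  have C0: "card ?C > 0" by (rule card_conj_class_pos[OF h])
  define f where "f x = (if x \<in> ?C then 1 else (0::complex))" for x
  have f: "class_function G f"
    unfolding class_function_def f_def using conj_class_conjugate_iff[OF _ _ h] by simp
  have "(\<Sum>y\<in>carrier G. f y * cnj (\<chi> y)) / of_nat ?n * \<chi> g
      = of_nat (card ?C) / of_nat ?n * (\<chi> g * cnj (\<chi> h))" if \<chi>: "\<chi> \<in> Irr G" for \<chi>
  proof -
    have "(\<Sum>y\<in>carrier G. f y * cnj (\<chi> y)) = (\<Sum>y\<in>?C. cnj (\<chi> y))"
      unfolding f_def using finite_carrier conj_class_subset_carrier[OF h]
      by (simp add: if_distrib[of "\<lambda>x. x * _"] sum.If_cases Int_absorb1 cong: if_cong)
    also have "\<dots> = of_nat (card ?C) * cnj (\<chi> h)" using Irr_conj_class[OF \<chi> h] by simp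
    finally show ?thesis by simp
  qed
  hence "f g = of_nat (card ?C) / of_nat ?n * (\<Sum>\<chi>\<in>Irr G. \<chi> g * cnj (\<chi> h))"
    unfolding class_function_Irr_expansion[OF f g] sum_distrib_left by (rule sum.cong[OF refl])
  thus ?thesis unfolding f_def using card_carrier_pos C0 by (auto simp: field_simps)
qed

end

section \<open>Linear and central characters\<close>

lemma sum_eq_0_if_bij_scales:
  fixes \<psi> :: "'b \<Rightarrow> 'c :: field"
  assumes bij: "bij_betw f A A" and scale: "\<And>a. a \<in> A \<Longrightarrow> \<psi> (f a) = c * \<psi> a" and c: "c \<noteq> 1"
  shows "sum \<psi> A = 0"
proof -
  have "sum \<psi> A = sum (\<lambda>a. \<psi> (f a)) A" using sum.reindex_bij_betw[OF bij, of \<psi>] by simp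
  also have "\<dots> = c * sum \<psi> A" using scale by (simp add: sum_distrib_left)
  finally have "(1 - c) * sum \<psi> A = 0" by (simp add: algebra_simps)
  thus ?thesis using c by simp
qed

lemma invariant_subspace_dim_one:
  assumes "invariant_subspace G 1 \<rho> W"
  shows "W = {0\<^sub>v 1} \<or> W = carrier_vec 1"
proof (cases "W = {0\<^sub>v 1}")
  case False
  have WC: "W \<subseteq> carrier_vec 1" and z: "0\<^sub>v 1 \<in> W" and sm: "\<And>c v. v \<in> W \<Longrightarrow> c \<cdot>\<^sub>v v \<in> W"
    using assms unfolding invariant_subspace_def by auto
  obtain w where w: "w \<in> W" "w \<noteq> 0\<^sub>v 1" using False z by blast
  have wc: "w \<in> carrier_vec 1" using w WC by auto
  have w0: "w $ 0 \<noteq> 0" using w(2) wc by (auto intro!: eq_vecI)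
  have "v \<in> W" if v: "v \<in> carrier_vec 1" for v
  proof -
    have "v = (v $ 0 / w $ 0) \<cdot>\<^sub>v w" using v wc w0 by (intro eq_vecI) auto
    thus ?thesis using sm[OF w(1)] by metis
  qed
  thus ?thesis using WC by auto
qed simp

lemma irreducible_rep_dim_one: "is_rep G 1 \<rho> \<Longrightarrow> irreducible_rep G 1 \<rho>"
  unfolding irreducible_rep_def using invariant_subspace_dim_one by auto

definition center :: "'a monoid \<Rightarrow> 'a set" where
  "center G = {z \<in> carrier G. \<forall>x\<in>carrier G. x \<otimes>\<^bsub>G\<^esub> z = z \<otimes>\<^bsub>G\<^esub> x}"

definition linear_chars :: "'a monoid \<Rightarrow> ('a \<Rightarrow> complex) set" where
  "linear_chars G = {\<chi> \<in> Irr G. deg G \<chi> = 1}"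

definition principal_char :: "'a monoid \<Rightarrow> 'a \<Rightarrow> complex" where
  "principal_char G = character_of G (\<lambda>_. 1\<^sub>m 1)"

lemma linear_chars_subset_Irr: "linear_chars G \<subseteq> Irr G"
  unfolding linear_chars_def by auto

lemma linear_char_one: "\<chi> \<in> linear_chars G \<Longrightarrow> \<chi> \<one>\<^bsub>G\<^esub> = 1"
  unfolding linear_chars_def deg_def by auto

context plain_group
begin

lemma center_subset_carrier: "center G \<subseteq> carrier G"
  unfolding center_def by auto

lemma one_in_center: "\<one> \<in> center G"
  unfolding center_def by simp

lemma center_mult:
  assumes z: "z \<in> center G" and z': "z' \<in> center G"
  shows "z \<otimes> z' \<in> center G"
proof -
  have zc: "z \<in> carrier G" "z' \<in> carrier G" using z z' unfolding center_def by auto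
  have "x \<otimes> (z \<otimes> z') = (z \<otimes> z') \<otimes> x" if x: "x \<in> carrier G" for x
  proof -
    have xz: "x \<otimes> z = z \<otimes> x" and xz': "x \<otimes> z' = z' \<otimes> x" using z z' x unfolding center_def by auto
    have "x \<otimes> (z \<otimes> z') = z \<otimes> (x \<otimes> z')" using x zc xz by (simp flip: m_assoc)
    also have "\<dots> = (z \<otimes> z') \<otimes> x" using x zc xz' by (simp add: m_assoc)
    finally show ?thesis .
  qed
  thus ?thesis using zc unfolding center_def by auto
qed

lemma center_inv:
  assumes z: "z \<in> center G"
  shows "inv z \<in> center G"
proof -
  have zc: "z \<in> carrier G" and comm: "\<And>x. x \<in> carrier G \<Longrightarrow> x \<otimes> z = z \<otimes> x"
    using z unfolding center_def by auto
  have "x \<otimes> inv z = inv z \<otimes> x" if x: "x \<in> carrier G" for x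
  proof -
    have "inv z \<otimes> x = inv z \<otimes> (x \<otimes> z) \<otimes> inv z" using zc x by (simp add: m_assoc)
    also have "\<dots> = x \<otimes> inv z" using comm[OF x] zc x by (simp add: m_assoc inv_mult_cancel_left)
    finally show ?thesis by simp
  qed
  thus ?thesis unfolding center_def using zc by auto
qed

lemma bij_betw_center_mult:
  assumes z: "z \<in> center G"
  shows "bij_betw (\<lambda>y. z \<otimes> y) (center G) (center G)"
proof (rule bij_betw_byWitness[where f' = "\<lambda>y. inv z \<otimes> y"])
  have zc: "z \<in> carrier G" using z center_subset_carrier by auto
  show "\<forall>y\<in>center G. inv z \<otimes> (z \<otimes> y) = y"
    using zc center_subset_carrier by (auto intro: inv_mult_cancel_left)
  show "\<forall>y\<in>center G. z \<otimes> (inv z \<otimes> y) = y"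
    using zc center_subset_carrier by (auto intro: mult_inv_cancel_left)
  show "(\<lambda>y. z \<otimes> y) ` center G \<subseteq> center G" using z center_mult by auto
  show "(\<lambda>y. inv z \<otimes> y) ` center G \<subseteq> center G" using center_inv[OF z] center_mult by auto
qed

lemma card_conj_class_eq_1_iff:
  assumes g: "g \<in> carrier G"
  shows "card (conj_class G g) = 1 \<longleftrightarrow> g \<in> center G"
proof
  assume "card (conj_class G g) = 1"
  hence cls: "conj_class G g = {g}" using conj_class_self[OF g] by (metis card_1_singletonE singletonD)
  have "x \<otimes> g = g \<otimes> x" if x: "x \<in> carrier G" for x
  proof -
    have "x \<otimes> g \<otimes> inv x \<in> conj_class G g" unfolding conj_class_iff using x by blast
    hence "x \<otimes> g \<otimes> inv x = g" using cls by simp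
    hence "x \<otimes> g \<otimes> inv x \<otimes> x = g \<otimes> x" by simp
    thus ?thesis using x g by (simp add: m_assoc)
  qed
  thus "g \<in> center G" unfolding center_def using g by auto
next
  assume z: "g \<in> center G"
  have "conj_class G g = {g}"
  proof (intro equalityI subsetI)
    fix y assume "y \<in> conj_class G g"
    then obtain k where k: "k \<in> carrier G" "y = k \<otimes> g \<otimes> inv k" unfolding conj_class_iff by auto
    have "k \<otimes> g = g \<otimes> k" using z k unfolding center_def by auto
    hence "y = g \<otimes> k \<otimes> inv k" using k by simp
    also have "\<dots> = g" using k g by (simp add: m_assoc)
    finally show "y \<in> {g}" by simp
  qed (simp add: conj_class_self[OF g])
  thus "card (conj_class G g) = 1" by simp
qed

lemma Irr_degE:
  assumes "\<chi> \<in> Irr G"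
  obtains d \<sigma> where "irreducible_rep G d \<sigma>" "\<chi> = character_of G \<sigma>" "deg G \<chi> = of_nat d" "d \<in> cd G"
proof -
  obtain d \<sigma> where irr: "irreducible_rep G d \<sigma>" and \<chi>: "\<chi> = character_of G \<sigma>" using IrrE[OF assms] .
  have "deg G \<chi> = of_nat d"
    unfolding deg_def \<chi> using is_rep_one[OF irreducible_rep_is_rep[OF irr]] by (simp add: character_of_apply)
  moreover have "d \<in> cd G" unfolding cd_def using irr by auto
  ultimately show ?thesis using that irr \<chi> by blast
qed

lemma linear_char_mult:
  assumes \<chi>: "\<chi> \<in> linear_chars G" and x: "x \<in> carrier G" and y: "y \<in> carrier G"
  shows "\<chi> (x \<otimes> y) = \<chi> x * \<chi> y"
proof -
  obtain d \<sigma> where irr: "irreducible_rep G d \<sigma>" and ch: "\<chi> = character_of G \<sigma>" and "deg G \<chi> = of_nat d"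
    using Irr_degE \<chi> unfolding linear_chars_def by blast
  hence rep: "is_rep G 1 \<sigma>" using \<chi> irreducible_rep_is_rep unfolding linear_chars_def by fastforce
  have sc: "\<And>g. g \<in> carrier G \<Longrightarrow> \<sigma> g \<in> carrier_mat 1 1" by (rule is_rep_carrier[OF rep])
  have "\<sigma> (x \<otimes> y) $$ (0,0) = \<sigma> x $$ (0,0) * \<sigma> y $$ (0,0)"
    using is_rep_mult[OF rep x y] mult_mat_index_sum[OF sc[OF x] sc[OF y], of 0 0] by simp
  thus ?thesis unfolding ch using x y sc by (simp add: character_of_apply mat_tr_one_by_one)
qed

lemma linear_char_times:
  assumes \<chi>: "\<chi> \<in> linear_chars G" and \<mu>: "\<mu> \<in> linear_chars G"
  shows "(\<lambda>g. \<chi> g * \<mu> g) \<in> linear_chars G"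
proof -
  define \<rho> where "\<rho> g = mat 1 1 (\<lambda>_. \<chi> g * \<mu> g)" for g
  have "is_rep G 1 \<rho>" unfolding is_rep_def
  proof (intro conjI ballI)
    show "\<rho> \<one> = 1\<^sub>m 1" unfolding \<rho>_def using linear_char_one[OF \<chi>] linear_char_one[OF \<mu>] by (intro eq_matI) auto
    fix g h assume g: "g \<in> carrier G" and h: "h \<in> carrier G"
    show "\<rho> (g \<otimes> h) = \<rho> g * \<rho> h" unfolding \<rho>_def
      using linear_char_mult[OF \<chi> g h] linear_char_mult[OF \<mu> g h] by (intro eq_matI) (auto simp: scalar_prod_def)
  qed (auto simp: \<rho>_def)
  moreover have "character_of G \<rho> = (\<lambda>g. \<chi> g * \<mu> g)"
    using Irr_outside_carrier \<chi> linear_chars_subset_Irr unfolding character_of_def \<rho>_def mat_tr_def by fastforce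
  ultimately have "(\<lambda>g. \<chi> g * \<mu> g) \<in> Irr G"
    unfolding Irr_def using irreducible_rep_dim_one by (intro CollectI exI[of _ 1] exI[of _ \<rho>]) simp
  thus ?thesis unfolding linear_chars_def deg_def using linear_char_one[OF \<chi>] linear_char_one[OF \<mu>] by simp
qed

lemma irreducible_rep_center_scalar:
  assumes irr: "irreducible_rep G d \<sigma>" and z: "z \<in> center G"
  shows "\<sigma> z = (mat_tr (\<sigma> z) / of_nat d) \<cdot>\<^sub>m 1\<^sub>m d"
proof -
  have rep: "is_rep G d \<sigma>" and d: "d > 0" using irr by (auto dest: irreducible_rep_is_rep irreducible_rep_dim_pos)
  have zc: "z \<in> carrier G" using z center_subset_carrier by auto
  have "\<sigma> z * \<sigma> x = \<sigma> x * \<sigma> z" if x: "x \<in> carrier G" for x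
  proof -
    have "z \<otimes> x = x \<otimes> z" using z x unfolding center_def by auto
    thus ?thesis using is_rep_mult[OF rep zc x] is_rep_mult[OF rep x zc] by simp
  qed
  then obtain c where c: "\<sigma> z = c \<cdot>\<^sub>m 1\<^sub>m d" using schur_lemma_scalar[OF irr is_rep_carrier[OF rep zc]] by metis
  hence "mat_tr (\<sigma> z) = c * of_nat d" by (simp add: mat_tr_smult[of _ d])
  thus ?thesis using c d by simp
qed

lemma principal_char_apply: "g \<in> carrier G \<Longrightarrow> principal_char G g = 1"
  unfolding principal_char_def character_of_def by simp

lemma principal_char_linear: "principal_char G \<in> linear_chars G"
proof -
  have "irreducible_rep G 1 (\<lambda>_. 1\<^sub>m 1)" by (rule irreducible_rep_dim_one) (simp add: is_rep_def)
  hence "principal_char G \<in> Irr G" unfolding Irr_def principal_char_def by blast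
  thus ?thesis unfolding linear_chars_def deg_def by (simp add: principal_char_apply)
qed

end

context finite_group
begin

lemma linear_char_norm:
  assumes \<chi>: "\<chi> \<in> linear_chars G" and g: "g \<in> carrier G"
  shows "\<chi> g * cnj (\<chi> g) = 1"
  using linear_char_mult[OF \<chi> g inv_closed[OF g]] linear_char_one[OF \<chi>]
    Irr_inv[OF subsetD[OF linear_chars_subset_Irr \<chi>] g] g by simp

lemma finite_linear_chars: "finite (linear_chars G)"
  using finite_Irr linear_chars_subset_Irr finite_subset by blast

lemma sum_Irr:
  assumes "\<chi> \<in> Irr G"
  shows "(\<Sum>g\<in>carrier G. \<chi> g) = (if \<chi> = principal_char G then of_nat (card (carrier G)) else 0)"
  using Irr_row_orthogonality[OF assms subsetD[OF linear_chars_subset_Irr principal_char_linear]]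
  by (simp add: principal_char_apply)

text \<open>If some linear character \<open>\<mu>\<close> has \<open>\<mu>(x) \<noteq> 1\<close>, multiplication by \<open>\<mu>\<close> permutes the
  linear characters and scales the sum by \<open>\<mu>(x)\<close>.\<close>
lemma sum_linear_chars:
  assumes x: "x \<in> carrier G"
  shows "(\<Sum>l\<in>linear_chars G. l x) = (if \<forall>l\<in>linear_chars G. l x = 1 then of_nat (card (linear_chars G)) else 0)"
proof (cases "\<forall>l\<in>linear_chars G. l x = 1")
  case True
  hence "(\<Sum>l\<in>linear_chars G. l x) = (\<Sum>l\<in>linear_chars G. 1)" by (intro sum.cong) auto
  thus ?thesis using True by simp
next
  case False
  then obtain \<mu> where \<mu>: "\<mu> \<in> linear_chars G" "\<mu> x \<noteq> 1" by auto
  define f where "f l = (\<lambda>g. \<mu> g * l g)" for l :: "'a \<Rightarrow> complex"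
  have sub: "f ` linear_chars G \<subseteq> linear_chars G" unfolding f_def using linear_char_times[OF \<mu>(1)] by auto
  have "inj_on f (linear_chars G)"
  proof (rule inj_onI, rule ext)
    fix l1 l2 g assume l: "l1 \<in> linear_chars G" "l2 \<in> linear_chars G" and eq: "f l1 = f l2"
    show "l1 g = l2 g"
    proof (cases "g \<in> carrier G")
      case True
      have "\<mu> g \<noteq> 0" using linear_char_norm[OF \<mu>(1) True] by auto
      thus ?thesis using fun_cong[OF eq, of g] unfolding f_def by simp
    next
      case False
      have "l1 \<in> Irr G" "l2 \<in> Irr G" using l linear_chars_subset_Irr by auto
      thus ?thesis using Irr_outside_carrier[OF _ False] by metis
    qed
  qed
  hence "bij_betw f (linear_chars G) (linear_chars G)"
    using endo_inj_surj[OF finite_linear_chars sub] unfolding bij_betw_def by simp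
  hence "(\<Sum>l\<in>linear_chars G. l x) = 0"
    by (rule sum_eq_0_if_bij_scales[of _ _ _ "\<mu> x"]) (auto simp: f_def \<mu>(2))
  thus ?thesis using False by (simp only: if_False)
qed

text \<open>By Schur's lemma an irreducible representation maps the centre to scalars, so on the centre
  an irreducible character is its degree times a unitary homomorphism \<open>\<omega>\<close>.\<close>
lemma central_characterE:
  assumes \<chi>: "\<chi> \<in> Irr G"
  obtains d \<omega> where "deg G \<chi> = of_nat d"
    "\<And>z. z \<in> center G \<Longrightarrow> \<chi> z = of_nat d * \<omega> z"
    "\<And>z z'. z \<in> center G \<Longrightarrow> z' \<in> center G \<Longrightarrow> \<omega> (z \<otimes> z') = \<omega> z * \<omega> z'"
    "\<And>z. z \<in> center G \<Longrightarrow> \<omega> z * cnj (\<omega> z) = 1"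
proof -
  obtain d \<sigma> where irr: "irreducible_rep G d \<sigma>" and ch: "\<chi> = character_of G \<sigma>" and dg: "deg G \<chi> = of_nat d"
    using Irr_degE[OF \<chi>] by metis
  have rep: "is_rep G d \<sigma>" and d: "d > 0" using irr by (auto dest: irreducible_rep_is_rep irreducible_rep_dim_pos)
  define \<omega> where "\<omega> z = \<chi> z / of_nat d" for z
  have \<chi>\<omega>: "\<chi> z = of_nat d * \<omega> z" for z unfolding \<omega>_def using d by simp
  have scalar: "\<sigma> z = \<omega> z \<cdot>\<^sub>m 1\<^sub>m d" if z: "z \<in> center G" for z
    using irreducible_rep_center_scalar[OF irr z] z center_subset_carrier
    unfolding \<omega>_def ch by (auto simp: character_of_apply)
  have mult: "\<omega> (z \<otimes> z') = \<omega> z * \<omega> z'" if z: "z \<in> center G" "z' \<in> center G" for z z'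
  proof -
    have zc: "z \<in> carrier G" "z' \<in> carrier G" using z center_subset_carrier by auto
    have "\<omega> (z \<otimes> z') \<cdot>\<^sub>m 1\<^sub>m d = (\<omega> z * \<omega> z') \<cdot>\<^sub>m 1\<^sub>m d"
      using is_rep_mult[OF rep zc] scalar[OF z(1)] scalar[OF z(2)] scalar[OF center_mult[OF z]]
      by (auto simp: mult_smult_distrib)
    hence "(\<omega> (z \<otimes> z') \<cdot>\<^sub>m 1\<^sub>m d) $$ (0,0) = ((\<omega> z * \<omega> z') \<cdot>\<^sub>m 1\<^sub>m d) $$ (0,0)" by simp
    thus ?thesis using d by simp
  qed
  have "\<omega> z * cnj (\<omega> z) = 1" if z: "z \<in> center G" for z
  proof -
    have zc: "z \<in> carrier G" using z center_subset_carrier by auto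
    have "\<omega> (inv z) = cnj (\<omega> z)" unfolding \<omega>_def using Irr_inv[OF \<chi> zc] by simp
    moreover have "\<omega> z * \<omega> (inv z) = \<omega> \<one>" using mult[OF z center_inv[OF z]] zc by simp
    moreover have "\<omega> \<one> = 1" unfolding \<omega>_def using dg d unfolding deg_def by simp
    ultimately show ?thesis by simp
  qed
  thus ?thesis using that[OF dg \<chi>\<omega> mult] by blast
qed

lemma sum_center_Irr_mult_cnj:
  assumes \<chi>1: "\<chi>1 \<in> Irr G" and \<chi>2: "\<chi>2 \<in> Irr G"
  shows "(\<Sum>z\<in>center G. \<chi>1 z * cnj (\<chi>2 z)) = 0 \<or>
         (\<Sum>z\<in>center G. \<chi>1 z * cnj (\<chi>2 z)) = deg G \<chi>1 * deg G \<chi>2 * of_nat (card (center G))"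
proof -
  obtain d1 \<omega>1 where d1: "deg G \<chi>1 = of_nat d1" and ch1: "\<And>z. z \<in> center G \<Longrightarrow> \<chi>1 z = of_nat d1 * \<omega>1 z"
    and m1: "\<And>z z'. z \<in> center G \<Longrightarrow> z' \<in> center G \<Longrightarrow> \<omega>1 (z \<otimes> z') = \<omega>1 z * \<omega>1 z'"
    using central_characterE[OF \<chi>1] by metis
  obtain d2 \<omega>2 where d2: "deg G \<chi>2 = of_nat d2" and ch2: "\<And>z. z \<in> center G \<Longrightarrow> \<chi>2 z = of_nat d2 * \<omega>2 z"
    and m2: "\<And>z z'. z \<in> center G \<Longrightarrow> z' \<in> center G \<Longrightarrow> \<omega>2 (z \<otimes> z') = \<omega>2 z * \<omega>2 z'"
    using central_characterE[OF \<chi>2] by metis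
  define \<psi> where "\<psi> z = \<omega>1 z * cnj (\<omega>2 z)" for z
  have sum_eq: "(\<Sum>z\<in>center G. \<chi>1 z * cnj (\<chi>2 z)) = deg G \<chi>1 * deg G \<chi>2 * (\<Sum>z\<in>center G. \<psi> z)"
    unfolding d1 d2 \<psi>_def using ch1 ch2 by (simp add: sum_distrib_left mult_ac)
  show ?thesis
  proof (cases "\<forall>z\<in>center G. \<psi> z = 1")
    case True
    thus ?thesis unfolding sum_eq by simp
  next
    case False
    then obtain z0 where z0: "z0 \<in> center G" "\<psi> z0 \<noteq> 1" by auto
    have "(\<Sum>z\<in>center G. \<psi> z) = 0"
      by (rule sum_eq_0_if_bij_scales[OF bij_betw_center_mult[OF z0(1)], of \<psi> "\<psi> z0"])
        (use z0 in \<open>auto simp: \<psi>_def m1 m2\<close>)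
    thus ?thesis unfolding sum_eq by simp
  qed
qed

lemma sum_center_Irr_norm:
  assumes \<chi>: "\<chi> \<in> Irr G"
  shows "(\<Sum>z\<in>center G. \<chi> z * cnj (\<chi> z)) = deg G \<chi> * deg G \<chi> * of_nat (card (center G))"
proof -
  obtain d \<omega> where dg: "deg G \<chi> = of_nat d" and ch: "\<And>z. z \<in> center G \<Longrightarrow> \<chi> z = of_nat d * \<omega> z"
    and norm: "\<And>z. z \<in> center G \<Longrightarrow> \<omega> z * cnj (\<omega> z) = 1"
    using central_characterE[OF \<chi>] by metis
  have "\<chi> z * cnj (\<chi> z) = of_nat d * of_nat d" if "z \<in> center G" for z
    using ch[OF that] norm[OF that] by (simp add: algebra_simps)
  thus ?thesis unfolding dg by simp
qed

end

section \<open>Degree sums and the amenability constant of \<open>ZA(G)\<close>\<close>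

definition real_deg :: "'a monoid \<Rightarrow> ('a \<Rightarrow> complex) \<Rightarrow> real" where
  "real_deg G \<chi> = Re (deg G \<chi>)"

definition central_product :: "'a monoid \<Rightarrow> ('a \<Rightarrow> complex) \<Rightarrow> ('a \<Rightarrow> complex) \<Rightarrow> real" where
  "central_product G \<chi> \<chi>' = Re (\<Sum>z\<in>center G. \<chi> z * cnj (\<chi>' z))"

context plain_group
begin

lemma deg_Irr_eq_real_deg:
  assumes "\<chi> \<in> Irr G"
  shows "deg G \<chi> = of_real (real_deg G \<chi>)" "real_deg G \<chi> \<ge> 0"
  using Irr_degE[OF assms] unfolding real_deg_def by (metis Re_complex_of_real of_real_of_nat_eq of_nat_0_le_iff)+

lemma conj_class_one: "conj_class G \<one> = {\<one>}"
  using conj_class_self[OF one_closed] by (auto simp: conj_class_def)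

end

context finite_group
begin

abbreviation "n \<equiv> real (card (carrier G))"

lemma sum_Irr_mult_cnj_deg:
  assumes z: "z \<in> carrier G"
  shows "(\<Sum>\<chi>\<in>Irr G. \<chi> z * cnj (deg G \<chi>)) = (if z = \<one> then of_nat (card (carrier G)) else 0)"
  using Irr_column_orthogonality[OF z one_closed] unfolding deg_def conj_class_one by simp

lemma sum_real_deg_squared: "(\<Sum>\<chi>\<in>Irr G. (real_deg G \<chi>)\<^sup>2) = n"
proof -
  have "(\<Sum>\<chi>\<in>Irr G. complex_of_real ((real_deg G \<chi>)\<^sup>2)) = (\<Sum>\<chi>\<in>Irr G. \<chi> \<one> * cnj (deg G \<chi>))"
  proof (rule sum.cong[OF refl])
    fix \<chi> assume "\<chi> \<in> Irr G"
    thus "complex_of_real ((real_deg G \<chi>)\<^sup>2) = \<chi> \<one> * cnj (deg G \<chi>)"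
      using deg_Irr_eq_real_deg(1)[of \<chi>] unfolding deg_def by (simp add: power2_eq_square)
  qed
  also have "\<dots> = of_nat (card (carrier G))" using sum_Irr_mult_cnj_deg[OF one_closed] by simp
  finally have "complex_of_real (\<Sum>\<chi>\<in>Irr G. (real_deg G \<chi>)\<^sup>2) = complex_of_real n"
    by (simp only: of_real_sum of_real_of_nat_eq)
  thus ?thesis by (simp only: of_real_eq_iff)
qed

lemma central_product_Irr:
  assumes "\<chi> \<in> Irr G" "\<chi>' \<in> Irr G"
  shows "(\<Sum>z\<in>center G. \<chi> z * cnj (\<chi>' z)) = of_real (central_product G \<chi> \<chi>')"
    "central_product G \<chi> \<chi>' \<ge> 0"
proof -
  let ?Y = "\<Sum>z\<in>center G. \<chi> z * cnj (\<chi>' z)"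
  define r where "r = real_deg G \<chi> * real_deg G \<chi>' * real (card (center G))"
  have r: "r \<ge> 0" unfolding r_def using deg_Irr_eq_real_deg(2) assms by simp
  have "?Y = 0 \<or> ?Y = of_real r"
    using sum_center_Irr_mult_cnj[OF assms] deg_Irr_eq_real_deg(1)[OF assms(1)] deg_Irr_eq_real_deg(1)[OF assms(2)]
    unfolding r_def by simp
  hence "?Y = of_real (Re ?Y) \<and> Re ?Y \<ge> 0" using r by (elim disjE) simp_all
  thus "?Y = of_real (central_product G \<chi> \<chi>')" "central_product G \<chi> \<chi>' \<ge> 0"
    unfolding central_product_def by blast+
qed

lemma central_product_self:
  assumes \<chi>: "\<chi> \<in> Irr G"
  shows "central_product G \<chi> \<chi> = (real_deg G \<chi>)\<^sup>2 * real (card (center G))"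
proof -
  have "deg G \<chi> * deg G \<chi> * of_nat (card (center G)) = complex_of_real ((real_deg G \<chi>)\<^sup>2 * real (card (center G)))"
    using deg_Irr_eq_real_deg(1)[OF \<chi>] by (simp add: power2_eq_square)
  thus ?thesis unfolding central_product_def sum_center_Irr_norm[OF \<chi>] by (simp only: Re_complex_of_real)
qed

lemma central_product_self_le:
  assumes \<chi>: "\<chi> \<in> Irr G"
  shows "central_product G \<chi> \<chi> \<le> n"
proof -
  have "central_product G \<chi> \<chi> = (\<Sum>z\<in>center G. (cmod (\<chi> z))\<^sup>2)"
    unfolding central_product_def by (simp add: Re_sum complex_mult_cnj cmod_power2)
  also have "\<dots> \<le> (\<Sum>g\<in>carrier G. (cmod (\<chi> g))\<^sup>2)"
    using finite_carrier center_subset_carrier by (intro sum_mono2) auto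
  also have "\<dots> = Re (\<Sum>g\<in>carrier G. \<chi> g * cnj (\<chi> g))" by (simp add: Re_sum complex_mult_cnj cmod_power2)
  also have "\<dots> = n" using Irr_row_orthogonality[OF \<chi> \<chi>] by simp
  finally show ?thesis .
qed

lemma sum_real_deg_mult_central_product:
  assumes \<chi>: "\<chi> \<in> Irr G"
  shows "(\<Sum>\<chi>'\<in>Irr G. real_deg G \<chi>' * central_product G \<chi> \<chi>') = real_deg G \<chi> * n"
proof -
  have "(\<Sum>\<chi>'\<in>Irr G. deg G \<chi>' * (\<Sum>z\<in>center G. \<chi> z * cnj (\<chi>' z)))
      = (\<Sum>z\<in>center G. \<chi> z * cnj (\<Sum>\<chi>'\<in>Irr G. \<chi>' z * cnj (deg G \<chi>')))"
    by (simp add: sum_distrib_left sum_distrib_right sum.swap[of _ "center G"] mult_ac)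
  also have "\<dots> = (\<Sum>z\<in>center G. if z = \<one> then \<chi> z * of_nat (card (carrier G)) else 0)"
  proof (rule sum.cong[OF refl])
    fix z assume "z \<in> center G"
    hence "z \<in> carrier G" using center_subset_carrier by auto
    thus "\<chi> z * cnj (\<Sum>\<chi>'\<in>Irr G. \<chi>' z * cnj (deg G \<chi>')) = (if z = \<one> then \<chi> z * of_nat (card (carrier G)) else 0)"
      by (simp only: sum_Irr_mult_cnj_deg) simp
  qed
  also have "\<dots> = deg G \<chi> * of_nat (card (carrier G))"
    using one_in_center finite_subset[OF center_subset_carrier finite_carrier]
    by (simp add: sum.delta' deg_def)
  moreover have "(\<Sum>\<chi>'\<in>Irr G. deg G \<chi>' * (\<Sum>z\<in>center G. \<chi> z * cnj (\<chi>' z)))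
      = of_real (\<Sum>\<chi>'\<in>Irr G. real_deg G \<chi>' * central_product G \<chi> \<chi>')"
    unfolding of_real_sum
    by (intro sum.cong) (simp_all add: central_product_Irr(1)[OF \<chi>] deg_Irr_eq_real_deg(1))
  ultimately have "complex_of_real (\<Sum>\<chi>'\<in>Irr G. real_deg G \<chi>' * central_product G \<chi> \<chi>')
      = complex_of_real (real_deg G \<chi> * n)"
    using deg_Irr_eq_real_deg(1)[OF \<chi>] by simp
  thus ?thesis by (simp only: of_real_eq_iff)
qed

lemma card_carrier_diff_center: "real (card (carrier G - center G)) = n - real (card (center G))"
  using card_Diff_subset[OF finite_subset[OF center_subset_carrier finite_carrier] center_subset_carrier]
    card_mono[OF finite_carrier center_subset_carrier] by (simp add: of_nat_diff)

lemma sum_card_carrier_div_card_conj_class: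
  "(\<Sum>g\<in>carrier G. n / real (card (conj_class G g))) = real (card (Irr G)) * n"
proof -
  have "(\<Sum>g\<in>carrier G. complex_of_real (n / real (card (conj_class G g))))
      = (\<Sum>g\<in>carrier G. \<Sum>\<chi>\<in>Irr G. \<chi> g * cnj (\<chi> g))"
    using Irr_column_orthogonality conj_class_self by (intro sum.cong) auto
  also have "\<dots> = (\<Sum>\<chi>\<in>Irr G. \<Sum>g\<in>carrier G. \<chi> g * cnj (\<chi> g))" by (rule sum.swap)
  also have "\<dots> = of_nat (card (Irr G)) * of_nat (card (carrier G))" using Irr_row_orthogonality by simp
  finally have "complex_of_real (\<Sum>g\<in>carrier G. n / real (card (conj_class G g)))
      = complex_of_real (real (card (Irr G)) * n)"
    by (simp add: of_real_sum)
  thus ?thesis by (simp only: of_real_eq_iff)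
qed

end

locale two_class_sizes = finite_group +
  fixes s :: nat
  assumes cc_eq: "cc G = {1, s}"
begin

abbreviation "k \<equiv> real (card (center G))"

lemma s_pos: "s \<ge> 1"
proof -
  have "s \<in> card ` conj_class G ` carrier G" using cc_eq unfolding cc_def Conj_def by auto
  then obtain g where "g \<in> carrier G" "s = card (conj_class G g)" by auto
  thus ?thesis using card_conj_class_pos by fastforce
qed

lemma card_conj_class: "g \<in> carrier G \<Longrightarrow> card (conj_class G g) = (if g \<in> center G then 1 else s)"
  using cc_eq card_conj_class_eq_1_iff unfolding cc_def Conj_def by fastforce

text \<open>Weighting by \<open>|C|\<^sup>2\<close> is weighting each element by \<open>s\<close>, except central ones by \<open>1\<close>.\<close>
definition AMZA_inner :: "('a \<Rightarrow> complex) \<Rightarrow> ('a \<Rightarrow> complex) \<Rightarrow> real" where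
  "AMZA_inner \<chi> \<chi>' = (if \<chi> = \<chi>' then real s * n else 0) - (real s - 1) * central_product G \<chi> \<chi>'"

lemma sum_Conj_card_squared:
  assumes \<chi>: "\<chi> \<in> Irr G" and \<chi>': "\<chi>' \<in> Irr G"
  shows "(\<Sum>C\<in>Conj G. of_nat (card C ^ 2) * cval \<chi> C * cnj (cval \<chi>' C)) = of_real (AMZA_inner \<chi> \<chi>')"
proof -
  let ?H = "\<lambda>C. of_nat (card C) * cval \<chi> C * cnj (cval \<chi>' C) :: complex"
  let ?p = "\<lambda>g. \<chi> g * cnj (\<chi>' g)"
  have "(\<Sum>C\<in>Conj G. of_nat (card C ^ 2) * cval \<chi> C * cnj (cval \<chi>' C)) = (\<Sum>C\<in>Conj G. of_nat (card C) * ?H C)"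
    by (intro sum.cong) (auto simp: power2_eq_square mult_ac)
  also have "\<dots> = (\<Sum>g\<in>carrier G. ?H (conj_class G g))"
    by (rule sum_carrier_conj_class[OF finite_carrier, symmetric])
  also have "\<dots> = (\<Sum>g\<in>carrier G. of_nat s * ?p g + (if g \<in> center G then (1 - of_nat s) * ?p g else 0))"
    using card_conj_class cval_conj_class[OF \<chi>] cval_conj_class[OF \<chi>'] by (intro sum.cong) (auto simp: algebra_simps)
  also have "\<dots> = of_nat s * (\<Sum>g\<in>carrier G. ?p g) + (\<Sum>g\<in>carrier G. if g \<in> center G then (1 - of_nat s) * ?p g else 0)"
    by (simp add: sum.distrib sum_distrib_left)
  also have "(\<Sum>g\<in>carrier G. if g \<in> center G then (1 - of_nat s) * ?p g else 0) = (1 - of_nat s) * (\<Sum>z\<in>center G. ?p z)"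
    by (simp only: sum.inter_restrict[OF finite_carrier, symmetric] Int_absorb1[OF center_subset_carrier]
        sum_distrib_left)
  finally show ?thesis
    unfolding Irr_row_orthogonality[OF \<chi> \<chi>'] central_product_Irr(1)[OF \<chi> \<chi>'] AMZA_inner_def
    by (simp add: algebra_simps)
qed

lemma AMZA_inner_self:
  assumes \<chi>: "\<chi> \<in> Irr G"
  shows "AMZA_inner \<chi> \<chi> = real s * n - (real s - 1) * (real_deg G \<chi>)\<^sup>2 * k" "AMZA_inner \<chi> \<chi> \<ge> 0"
proof -
  show eq: "AMZA_inner \<chi> \<chi> = real s * n - (real s - 1) * (real_deg G \<chi>)\<^sup>2 * k"
    unfolding AMZA_inner_def central_product_self[OF \<chi>] by simp
  have "(real s - 1) * central_product G \<chi> \<chi> \<le> (real s - 1) * n"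
    using s_pos central_product_self_le[OF \<chi>] by (intro mult_left_mono) auto
  thus "AMZA_inner \<chi> \<chi> \<ge> 0" unfolding AMZA_inner_def using s_pos by (simp add: algebra_simps)
qed

lemma abs_AMZA_inner_distinct:
  "\<chi> \<in> Irr G \<Longrightarrow> \<chi>' \<in> Irr G \<Longrightarrow> \<chi>' \<noteq> \<chi> \<Longrightarrow> \<bar>AMZA_inner \<chi> \<chi>'\<bar> = (real s - 1) * central_product G \<chi> \<chi>'"
  unfolding AMZA_inner_def using s_pos central_product_Irr(2) by auto

lemma sum_AMZA_row:
  assumes \<chi>: "\<chi> \<in> Irr G"
  shows "(\<Sum>\<chi>'\<in>Irr G. real_deg G \<chi>' * \<bar>AMZA_inner \<chi> \<chi>'\<bar>)
    = real_deg G \<chi> * ((2 * real s - 1) * n - 2 * (real s - 1) * k * (real_deg G \<chi>)\<^sup>2)"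
proof -
  have "(\<Sum>\<chi>'\<in>Irr G. real_deg G \<chi>' * \<bar>AMZA_inner \<chi> \<chi>'\<bar>)
      = real_deg G \<chi> * AMZA_inner \<chi> \<chi> + (real s - 1) * (\<Sum>\<chi>'\<in>Irr G - {\<chi>}. real_deg G \<chi>' * central_product G \<chi> \<chi>')"
    using sum.remove[OF finite_Irr \<chi>, of "\<lambda>\<chi>'. real_deg G \<chi>' * \<bar>AMZA_inner \<chi> \<chi>'\<bar>"]
      AMZA_inner_self(2)[OF \<chi>] abs_AMZA_inner_distinct[OF \<chi>]
    by (simp add: sum_distrib_left mult_ac)
  also have "(\<Sum>\<chi>'\<in>Irr G - {\<chi>}. real_deg G \<chi>' * central_product G \<chi> \<chi>')
      = real_deg G \<chi> * n - real_deg G \<chi> * central_product G \<chi> \<chi>"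
    using sum.remove[OF finite_Irr \<chi>, of "\<lambda>\<chi>'. real_deg G \<chi>' * central_product G \<chi> \<chi>'"]
      sum_real_deg_mult_central_product[OF \<chi>] by simp
  finally show ?thesis
    unfolding AMZA_inner_self(1)[OF \<chi>] central_product_self[OF \<chi>] by (simp add: algebra_simps power2_eq_square)
qed

lemma AMZA_formula:
  "AMZA G * n\<^sup>2 = (2 * real s - 1) * n\<^sup>2 - 2 * (real s - 1) * k * (\<Sum>\<chi>\<in>Irr G. (real_deg G \<chi>) ^ 4)"
proof -
  have "(\<Sum>\<chi>\<in>Irr G. \<Sum>\<chi>'\<in>Irr G. cmod (deg G \<chi> * deg G \<chi>') *
        cmod (\<Sum>C\<in>Conj G. of_nat (card C ^ 2) * cval \<chi> C * cnj (cval \<chi>' C)))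
      = (\<Sum>\<chi>\<in>Irr G. real_deg G \<chi> * (\<Sum>\<chi>'\<in>Irr G. real_deg G \<chi>' * \<bar>AMZA_inner \<chi> \<chi>'\<bar>))"
    using sum_Conj_card_squared deg_Irr_eq_real_deg
    by (simp add: norm_mult sum_distrib_left mult_ac)
  also have "\<dots> = (\<Sum>\<chi>\<in>Irr G. (2 * real s - 1) * n * (real_deg G \<chi>)\<^sup>2 - 2 * (real s - 1) * k * (real_deg G \<chi>) ^ 4)"
  proof (rule sum.cong[OF refl])
    fix \<chi> assume "\<chi> \<in> Irr G"
    thus "real_deg G \<chi> * (\<Sum>\<chi>'\<in>Irr G. real_deg G \<chi>' * \<bar>AMZA_inner \<chi> \<chi>'\<bar>)
        = (2 * real s - 1) * n * (real_deg G \<chi>)\<^sup>2 - 2 * (real s - 1) * k * (real_deg G \<chi>) ^ 4"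
      unfolding sum_AMZA_row[OF \<open>\<chi> \<in> Irr G\<close>] by (simp add: algebra_simps power2_eq_square power4_eq_xxxx)
  qed
  also have "\<dots> = (2 * real s - 1) * n * (\<Sum>\<chi>\<in>Irr G. (real_deg G \<chi>)\<^sup>2)
      - 2 * (real s - 1) * k * (\<Sum>\<chi>\<in>Irr G. (real_deg G \<chi>) ^ 4)"
    by (simp add: sum_subtractf sum_distrib_left)
  also have "\<dots> = (2 * real s - 1) * n\<^sup>2 - 2 * (real s - 1) * k * (\<Sum>\<chi>\<in>Irr G. (real_deg G \<chi>) ^ 4)"
    unfolding sum_real_deg_squared by (simp add: power2_eq_square)
  finally show ?thesis
    unfolding AMZA_def using card_carrier_pos by simp
qed

lemma sum_card_conj_class: "(\<Sum>g\<in>carrier G. real (card (conj_class G g))) = k + real s * (n - k)"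
proof -
  have "(\<Sum>g\<in>carrier G. real (card (conj_class G g))) = (\<Sum>g\<in>carrier G. if g \<in> center G then 1 else real s)"
    using card_conj_class by (intro sum.cong) auto
  also have "\<dots> = k + real s * (n - k)"
    using finite_carrier center_subset_carrier
    by (simp add: sum.If_cases Int_absorb1 Diff_eq[symmetric] card_carrier_diff_center)
  finally show ?thesis .
qed

text \<open>The class equation, read through the second orthogonality relation.\<close>
lemma card_Irr_class_equation: "real s * real (card (Irr G)) = real s * k + (n - k)"
proof -
  have "real (card (Irr G)) * n = (\<Sum>g\<in>carrier G. if g \<in> center G then n else n / real s)"
    unfolding sum_card_carrier_div_card_conj_class[symmetric] using card_conj_class by (intro sum.cong) auto
  also have "\<dots> = k * n + (n - k) * (n / real s)"
    using finite_carrier center_subset_carrier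
    by (simp add: sum.If_cases Int_absorb1 Diff_eq[symmetric] card_carrier_diff_center)
  finally have "real s * real (card (Irr G)) * n = (real s * k + (n - k)) * n"
    using s_pos by (simp add: field_simps)
  thus ?thesis using card_carrier_pos by simp
qed

end

section \<open>The amenability constant of \<open>ZL\<^sup>1(G)\<close>\<close>

definition linear_product :: "'a monoid \<Rightarrow> 'a \<Rightarrow> 'a \<Rightarrow> real" where
  "linear_product G g h = Re (\<Sum>l\<in>linear_chars G. l g * cnj (l h))"

context finite_group
begin

lemma sum_linear_chars_mult_cnj:
  assumes g: "g \<in> carrier G" and h: "h \<in> carrier G"
  shows "(\<Sum>l\<in>linear_chars G. l g * cnj (l h))
    = (if \<forall>l\<in>linear_chars G. l (g \<otimes> inv h) = 1 then of_nat (card (linear_chars G)) else 0)"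
proof -
  have "(\<Sum>l\<in>linear_chars G. l g * cnj (l h)) = (\<Sum>l\<in>linear_chars G. l (g \<otimes> inv h))"
    using linear_char_mult[OF _ g inv_closed[OF h]] Irr_inv[OF subsetD[OF linear_chars_subset_Irr] h]
    by (intro sum.cong) auto
  thus ?thesis using sum_linear_chars g h by simp
qed

lemma linear_product:
  assumes "g \<in> carrier G" "h \<in> carrier G"
  shows "(\<Sum>l\<in>linear_chars G. l g * cnj (l h)) = of_real (linear_product G g h)" "linear_product G g h \<ge> 0"
  unfolding linear_product_def using sum_linear_chars_mult_cnj[OF assms] by auto

lemma linear_product_conj_class:
  assumes g: "g \<in> carrier G" and h: "h \<in> conj_class G g"
  shows "linear_product G g h = real (card (linear_chars G))"
proof -
  have "l g * cnj (l h) = 1" if l: "l \<in> linear_chars G" for l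
    using Irr_conj_class[OF subsetD[OF linear_chars_subset_Irr l] g h] linear_char_norm[OF l g] by simp
  thus ?thesis unfolding linear_product_def by simp
qed

lemma sum_linear_product: 
  assumes g: "g \<in> carrier G"
  shows "(\<Sum>h\<in>carrier G. linear_product G g h) = n"
proof -
  have "(\<Sum>h\<in>carrier G. \<Sum>l\<in>linear_chars G. l g * cnj (l h)) = (\<Sum>l\<in>linear_chars G. l g * cnj (\<Sum>h\<in>carrier G. l h))"
    by (simp add: sum_distrib_left sum.swap[of _ "carrier G"])
  also have "\<dots> = (\<Sum>l\<in>linear_chars G. if l = principal_char G then l g * of_nat (card (carrier G)) else 0)"
  proof (rule sum.cong[OF refl])
    fix l assume "l \<in> linear_chars G"
    hence "l \<in> Irr G" using linear_chars_subset_Irr by auto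
    thus "l g * cnj (\<Sum>h\<in>carrier G. l h) = (if l = principal_char G then l g * of_nat (card (carrier G)) else 0)"
      by (simp only: sum_Irr) simp
  qed
  also have "\<dots> = of_nat (card (carrier G))"
    using principal_char_linear finite_linear_chars principal_char_apply[OF g] by (simp add: sum.delta')
  finally have "complex_of_real (\<Sum>h\<in>carrier G. linear_product G g h) = complex_of_real n"
    using linear_product(1)[OF g] by (simp add: of_real_sum)
  thus ?thesis by (simp only: of_real_eq_iff)
qed

lemma card_linear_chars_mult_card_conj_class_le:
  assumes g: "g \<in> carrier G"
  shows "real (card (linear_chars G)) * real (card (conj_class G g)) \<le> n"
proof -
  have "real (card (linear_chars G)) * real (card (conj_class G g)) = (\<Sum>h\<in>conj_class G g. linear_product G g h)"
    using linear_product_conj_class[OF g] by simp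
  also have "\<dots> \<le> (\<Sum>h\<in>carrier G. linear_product G g h)"
    using finite_carrier conj_class_subset_carrier[OF g] linear_product(2)[OF g] by (intro sum_mono2) auto
  also have "\<dots> = n" by (rule sum_linear_product[OF g])
  finally show ?thesis .
qed

end

locale two_char_degrees = finite_group +
  fixes m :: nat
  assumes cd_eq: "cd G = {1, m}"
begin

abbreviation "a \<equiv> real (card (linear_chars G))"

lemma m_pos: "m \<ge> 1"
proof -
  obtain \<sigma> where "irreducible_rep G m \<sigma>" using cd_eq unfolding cd_def by auto
  thus ?thesis using irreducible_rep_dim_pos by fastforce
qed

lemma real_deg_Irr: "\<chi> \<in> Irr G \<Longrightarrow> real_deg G \<chi> = (if \<chi> \<in> linear_chars G then 1 else real m)"
  using cd_eq unfolding linear_chars_def real_deg_def by (auto elim!: Irr_degE)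

lemma sum_real_deg_power:
  "(\<Sum>\<chi>\<in>Irr G. (real_deg G \<chi>) ^ p) = a + real m ^ p * (real (card (Irr G)) - a)"
proof -
  have "(\<Sum>\<chi>\<in>Irr G. (real_deg G \<chi>) ^ p) = (\<Sum>\<chi>\<in>Irr G. if \<chi> \<in> linear_chars G then 1 else real m ^ p)"
    using real_deg_Irr by (intro sum.cong) auto
  also have "\<dots> = a + real m ^ p * (real (card (Irr G)) - a)"
    using finite_Irr
    by (simp add: sum.If_cases Int_absorb1[OF linear_chars_subset_Irr] Diff_eq[symmetric]
        card_Diff_subset[OF finite_linear_chars linear_chars_subset_Irr]
        of_nat_diff card_mono[OF finite_Irr linear_chars_subset_Irr] algebra_simps)
  finally show ?thesis .
qed

text \<open>Weighting by \<open>d\<^sub>\<chi>\<^sup>2\<close> is weighting every character by \<open>m\<^sup>2\<close> and then correcting the linear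
  ones, so column orthogonality applies to the first part and \<open>linear_product\<close> to the second.\<close>
definition AMZL_entry :: "'a \<Rightarrow> 'a \<Rightarrow> real" where
  "AMZL_entry g h = real m ^ 2 * (if h \<in> conj_class G g then n / real (card (conj_class G g)) else 0)
    - (real m ^ 2 - 1) * linear_product G g h"

lemma sum_Irr_deg_squared_mult_cnj:
  assumes g: "g \<in> carrier G" and h: "h \<in> carrier G"
  shows "(\<Sum>\<chi>\<in>Irr G. (deg G \<chi>)\<^sup>2 * cval \<chi> (conj_class G g) * cnj (cval \<chi> (conj_class G h)))
    = of_real (AMZL_entry g h)"
proof -
  let ?p = "\<lambda>\<chi>. \<chi> g * cnj (\<chi> h)"
  have "(\<Sum>\<chi>\<in>Irr G. (deg G \<chi>)\<^sup>2 * cval \<chi> (conj_class G g) * cnj (cval \<chi> (conj_class G h)))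
      = (\<Sum>\<chi>\<in>Irr G. of_nat m ^ 2 * ?p \<chi> - (if \<chi> \<in> linear_chars G then (of_nat m ^ 2 - 1) * ?p \<chi> else 0))"
    using real_deg_Irr deg_Irr_eq_real_deg(1) cval_conj_class g h
    by (intro sum.cong) (auto simp: algebra_simps)
  also have "\<dots> = of_nat m ^ 2 * (\<Sum>\<chi>\<in>Irr G. ?p \<chi>) - (of_nat m ^ 2 - 1) * (\<Sum>l\<in>linear_chars G. ?p l)"
    using finite_Irr
    by (simp add: sum_subtractf sum_distrib_left sum.inter_restrict[symmetric] Int_absorb1[OF linear_chars_subset_Irr])
  also have "(\<Sum>\<chi>\<in>Irr G. ?p \<chi>) = (if h \<in> conj_class G g then of_nat (card (carrier G)) / of_nat (card (conj_class G g)) else 0)"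
    using Irr_column_orthogonality[OF g h] conj_class_sym[OF g h] conj_class_eq[OF g, of h] by auto
  finally show ?thesis unfolding AMZL_entry_def linear_product(1)[OF g h] by simp
qed

lemma sum_abs_AMZL_entry:
  assumes g: "g \<in> carrier G"
  shows "(\<Sum>h\<in>carrier G. \<bar>AMZL_entry g h\<bar>)
    = (2 * real m ^ 2 - 1) * n - 2 * (real m ^ 2 - 1) * a * real (card (conj_class G g))"
proof -
  let ?C = "conj_class G g" and ?c = "real (card (conj_class G g))"
  have c0: "?c > 0" using card_conj_class_pos[OF g] by simp
  have m1: "real m ^ 2 \<ge> 1" using m_pos by simp
  have on: "\<bar>AMZL_entry g h\<bar> = real m ^ 2 * n / ?c - (real m ^ 2 - 1) * a" if h: "h \<in> ?C" for h
  proof -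
    have "a \<le> n / ?c" using card_linear_chars_mult_card_conj_class_le[OF g] c0 by (simp add: field_simps)
    hence "(real m ^ 2 - 1) * a \<le> (real m ^ 2 - 1) * (n / ?c)" using m1 by (intro mult_left_mono) auto
    also have "\<dots> \<le> real m ^ 2 * (n / ?c)" by (intro mult_right_mono) auto
    finally show ?thesis unfolding AMZL_entry_def linear_product_conj_class[OF g h] using h by simp
  qed
  have off: "\<bar>AMZL_entry g h\<bar> = (real m ^ 2 - 1) * linear_product G g h" if h: "h \<in> carrier G - ?C" for h
    unfolding AMZL_entry_def using h m1 linear_product(2)[OF g, of h] by simp
  have "(\<Sum>h\<in>carrier G. \<bar>AMZL_entry g h\<bar>) = (\<Sum>h\<in>?C. \<bar>AMZL_entry g h\<bar>) + (\<Sum>h\<in>carrier G - ?C. \<bar>AMZL_entry g h\<bar>)"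
    using sum.subset_diff[OF conj_class_subset_carrier[OF g] finite_carrier] by (simp add: add.commute)
  also have "(\<Sum>h\<in>?C. \<bar>AMZL_entry g h\<bar>) = ?c * (real m ^ 2 * n / ?c - (real m ^ 2 - 1) * a)"
    using on by simp
  also have "(\<Sum>h\<in>carrier G - ?C. \<bar>AMZL_entry g h\<bar>) = (real m ^ 2 - 1) * (n - ?c * a)"
    using off sum.subset_diff[OF conj_class_subset_carrier[OF g] finite_carrier, of "linear_product G g"]
      sum_linear_product[OF g] linear_product_conj_class[OF g]
    by (simp add: sum_distrib_left)
  finally show ?thesis using c0 by (simp add: algebra_simps)
qed

lemma AMZL_formula:
  "AMZL G * n\<^sup>2 = (2 * real m ^ 2 - 1) * n\<^sup>2 - 2 * (real m ^ 2 - 1) * a * (\<Sum>g\<in>carrier G. real (card (conj_class G g)))"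
proof -
  define X where "X C C' = cmod (\<Sum>\<chi>\<in>Irr G. (deg G \<chi>)\<^sup>2 * cval \<chi> C * cnj (cval \<chi> C'))" for C C'
  have "(\<Sum>C\<in>Conj G. \<Sum>C'\<in>Conj G. real (card C) * real (card C') * X C C')
      = (\<Sum>C\<in>Conj G. real (card C) * (\<Sum>h\<in>carrier G. X C (conj_class G h)))"
    using sum_carrier_conj_class[OF finite_carrier, of "\<lambda>C'. X _ C'"] by (simp add: sum_distrib_left mult_ac)
  also have "\<dots> = (\<Sum>h\<in>carrier G. \<Sum>g\<in>carrier G. X (conj_class G g) (conj_class G h))"
    using sum_carrier_conj_class[OF finite_carrier, of "\<lambda>C. X C (conj_class G _)"]
    by (simp add: sum_distrib_left sum.swap[of _ "Conj G"])
  also have "\<dots> = (\<Sum>g\<in>carrier G. \<Sum>h\<in>carrier G. \<bar>AMZL_entry g h\<bar>)"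
    by (subst sum.swap) (simp add: X_def sum_Irr_deg_squared_mult_cnj)
  also have "\<dots> = (2 * real m ^ 2 - 1) * n\<^sup>2 - 2 * (real m ^ 2 - 1) * a * (\<Sum>g\<in>carrier G. real (card (conj_class G g)))"
    using sum_abs_AMZL_entry by (simp add: sum_subtractf sum_distrib_left power2_eq_square)
  finally show ?thesis unfolding AMZL_def X_def[symmetric] using card_carrier_pos by simp
qed

end

text \<open>Here \<open>a\<close>, \<open>x\<close>, \<open>k\<close> and \<open>M\<close> stand for the number of linear characters, \<open>|Irr G|\<close>, \<open>|Z(G)|\<close>
  and \<open>m\<^sup>2\<close>: the hypotheses are \<open>\<Sum> d\<^sub>\<chi>\<^sup>2 = n\<close> and the class equation, the two sides are the
  formulas for \<open>n\<^sup>2 AMZA\<close> and \<open>n\<^sup>2 AMZL\<close>.\<close>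
lemma AMZA_AMZL_identity:
  fixes n k a x s M :: real
  assumes deg: "a + M * (x - a) = n" and cls: "s * x = s * k + (n - k)"
  shows "(2 * s - 1) * n\<^sup>2 - 2 * (s - 1) * k * (a + M * (n - a))
    = (2 * M - 1) * n\<^sup>2 - 2 * (M - 1) * a * (k + s * (n - k))"
proof -
  have "s * n = s * a + M * (s * x) - s * M * a" using deg by (simp add: algebra_simps flip: deg)
  hence "s * (M - 1) * a - M * (s - 1) * k - (M - s) * n = 0" unfolding cls by (simp add: algebra_simps)
  moreover have "(2 * s - 1) * n\<^sup>2 - 2 * (s - 1) * k * (a + M * (n - a))
      - ((2 * M - 1) * n\<^sup>2 - 2 * (M - 1) * a * (k + s * (n - k)))
      = 2 * n * (s * (M - 1) * a - M * (s - 1) * k - (M - s) * n)"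
    by (simp add: algebra_simps power2_eq_square)
  ultimately show ?thesis by simp
qed

theorem theorem4p6:
  fixes G :: "'a monoid" and m s :: nat
  assumes "group G" and "finite (carrier G)"
    and "cd G = {1, m}" and "cc G = {1, s}"
  shows "AMZA G = AMZL G"
proof -
  have G: "finite_group G"
    using assms(1,2) unfolding finite_group_def finite_group_axioms_def plain_group_def by simp
  interpret two_class_sizes G s by (rule two_class_sizes.intro[OF G two_class_sizes_axioms.intro[OF assms(4)]])
  interpret two_char_degrees G m by (rule two_char_degrees.intro[OF G two_char_degrees_axioms.intro[OF assms(3)]])
  have sum_deg_sq: "a + real m ^ 2 * (real (card (Irr G)) - a) = n"
    using sum_real_deg_power[of 2] sum_real_deg_squared by simp
  have sum_deg_4: "(\<Sum>\<chi>\<in>Irr G. (real_deg G \<chi>) ^ 4) = a + real m ^ 2 * (n - a)"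
    using sum_real_deg_power[of 4] sum_deg_sq by (simp add: power_mult[of _ 2 2, simplified] flip: sum_deg_sq)
  have "AMZA G * n\<^sup>2 = AMZL G * n\<^sup>2"
    using AMZA_formula AMZL_formula sum_deg_4 sum_card_conj_class
      AMZA_AMZL_identity[OF sum_deg_sq card_Irr_class_equation] by simp
  thus ?thesis using card_carrier_pos by simp
qed

end
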